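(* Let $\mathcal M$ be a fully closed O*-vector space in $\mathcal L^\dagger(\mathcal D,\mathcal H)$ such that $\mathcal M'_{\rm w}\mathcal D\subset\mathcal D$, and let $E'$ be a projection in $\mathcal M'_{\rm w}$. Let $Z_{E'}$ be the projection onto $\overline{\langle\mathcal M'_{\rm w}E'\mathcal H\rangle}$ (central support of $E'$), and $\mathcal E=\langle\mathcal M'_{\rm w}E'\mathcal D\rangle\oplus(I-Z_{E'})\mathcal D\subset\mathcal D$. For $X\in(\mathcal M_{E'})''_{{\rm w}\sigma}$ define $X_e$ on $\mathcal E$ by $$X_e\Big(\sum_k C_kE'\xi_k+(I-Z_{E'})\eta\Big)=\sum_k C_kXE'\xi_k,\qquad C_k\in\mathcal M'_{\rm w},\ \xi_k,\eta\in\mathcal D,$$ and let $e(\mathcal M_{E'})=\{X_e:X\in(\mathcal M_{E'})''_{{\rm w}\sigma}\}$, an O*-vector space on $\mathcal E$. Assume that $\widehat{\mathcal D}(e(\mathcal M_{E'}))=\bigcap_{X\in(\mathcal M_{E'})''_{{\rm w}\sigma}}D(\overline{X_e})=\mathcal D$ (equivalently, the full closure of $\langle\mathcal M'_{\rm w}E'\mathcal D\rangle$ with respect to $e(\mathcal M_{E'})$ equals $Z_{E'}\mathcal D$). Then $(\mathcal M''_{{\rm w}\sigma})_{E'}=(\mathcal M_{E'})''_{{\rm w}\sigma}$.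
   Context: $\mathcal L^\dagger(\mathcal D,\mathcal H)$: linear operators $X$ with $D(X)=\mathcal D$ (dense subspace of Hilbert space $\mathcal H$), $D(X^* )\supseteq\mathcal D$, involution $X^\dagger=X^*\restriction_{\mathcal D}$. O*-vector space: $\dagger$-invariant subspace. $\widehat{\mathcal D}(\mathcal M)=\bigcap_{X\in\mathcal M}D(\overline X)$; $\mathcal M$ is fully closed if $\widehat{\mathcal D}(\mathcal M)=\mathcal D$. Weak commutant $\mathcal M'_{\rm w}=\{C\in\mathcal B(\mathcal H):\langle CX\xi,\eta\rangle=\langle C\xi,X^\dagger\eta\rangle\ \forall X\in\mathcal M,\ \xi,\eta\in\mathcal D\}$. Unbounded bicommutant $\mathcal M''_{{\rm w}\sigma}=\{X\in\mathcal L^\dagger(\mathcal D,\mathcal H):\langle CX\xi,\eta\rangle=\langle C\xi,X^\dagger\eta\rangle\ \forall C\in\mathcal M'_{\rm w},\ \xi,\eta\in\mathcal D\}$. Reduction by a projection $E'\in\mathcal M'_{\rm w}$ (with $\mathcal M'_{\rm w}\mathcal D\subset\mathcal D$): $\mathcal M_{E'}=\{X\restriction_{E'\mathcal D}:X\in\mathcal M\}$, an O*-vector space in $\mathcal L^\dagger(E'\mathcal D,E'\mathcal H)$, and similarly $(\mathcal M''_{{\rm w}\sigma})_{E'}=\{X\restriction_{E'\mathcal D}:X\in\mathcal M''_{{\rm w}\sigma}\}$; commutants of $\mathcal M_{E'}$ are taken in $E'\mathcal H$ with respect to the domain $E'\mathcal D$. $\langle\cdot\rangle$ denotes linear span. 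*)

theory Defs
  imports "HOL-Analysis.Analysis"
begin

class complex_vector = real_vector +
  fixes scaleC :: "complex \<Rightarrow> 'a \<Rightarrow> 'a"
  assumes scaleC_add_right: "scaleC a (x + y) = scaleC a x + scaleC a y"
    and scaleC_add_left: "scaleC (a + b) x = scaleC a x + scaleC b x"
    and scaleC_scaleC: "scaleC a (scaleC b x) = scaleC (a * b) x"
    and scaleC_one: "scaleC 1 x = x"
    and scaleR_scaleC: "scaleR r x = scaleC (complex_of_real r) x"

text \<open>Inner product, linear in the first and conjugate-linear in the second argument.\<close>
class complex_inner = complex_vector + real_normed_vector +
  fixes cinner :: "'a \<Rightarrow> 'a \<Rightarrow> complex"
  assumes cinner_commute: "cinner x y = cnj (cinner y x)"
    and cinner_add_left: "cinner (x + y) z = cinner x z + cinner y z"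
    and cinner_scaleC_left: "cinner (scaleC r x) y = r * cinner x y"
    and cinner_ge_zero: "Im (cinner x x) = 0 \<and> 0 \<le> Re (cinner x x)"
    and cinner_eq_zero_iff: "cinner x x = 0 \<longleftrightarrow> x = 0"
    and norm_eq_sqrt_cinner: "norm x = sqrt (Re (cinner x x))"

class chilbert_space = complex_inner + complete_space

definition csubspace :: "'h::complex_vector set \<Rightarrow> bool" where
  "csubspace S \<longleftrightarrow> 0 \<in> S \<and> (\<forall>x\<in>S. \<forall>y\<in>S. x + y \<in> S) \<and> (\<forall>a. \<forall>x\<in>S. scaleC a x \<in> S)"

definition cspan :: "'h::complex_vector set \<Rightarrow> 'h set" where
  "cspan S = {y. \<exists>(n::nat) c v. (\<forall>k<n. v k \<in> S) \<and> y = (\<Sum>k<n. scaleC (c k) (v k))}"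

text \<open>Restriction of a map to a domain; operators are represented canonically
  as maps vanishing outside their domain.\<close>
definition restr :: "'h set \<Rightarrow> ('h \<Rightarrow> 'h::complex_vector) \<Rightarrow> 'h \<Rightarrow> 'h" where
  "restr S X = (\<lambda>x. if x \<in> S then X x else 0)"

text \<open>Bounded operators on the closed subspace K (of the ambient Hilbert space),
  represented as maps vanishing outside K. For K = UNIV this is B(H).\<close>
definition Bop :: "'h::chilbert_space set \<Rightarrow> ('h \<Rightarrow> 'h) set" where
  "Bop K = {C. (\<forall>x. x \<notin> K \<longrightarrow> C x = 0) \<and> C ` K \<subseteq> K
     \<and> (\<forall>x\<in>K. \<forall>y\<in>K. C (x + y) = C x + C y)
     \<and> (\<forall>a. \<forall>x\<in>K. C (scaleC a x) = scaleC a (C x))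
     \<and> (\<exists>B. \<forall>x\<in>K. norm (C x) \<le> B * norm x)}"

definition is_proj :: "('h::chilbert_space \<Rightarrow> 'h) \<Rightarrow> bool" where
  "is_proj P \<longleftrightarrow> P \<in> Bop UNIV \<and> (\<forall>x. P (P x) = P x) \<and> (\<forall>x y. cinner (P x) y = cinner x (P y))"

text \<open>L-dagger(D,K): linear operators with domain D (dense in the Hilbert space K),
  values in K, whose adjoint domain contains D.\<close>
definition Ldag :: "'h::chilbert_space set \<Rightarrow> 'h set \<Rightarrow> ('h \<Rightarrow> 'h) set" where
  "Ldag K D = {X. (\<forall>x. x \<notin> D \<longrightarrow> X x = 0) \<and> X ` D \<subseteq> K
     \<and> (\<forall>x\<in>D. \<forall>y\<in>D. X (x + y) = X x + X y)
     \<and> (\<forall>a. \<forall>x\<in>D. X (scaleC a x) = scaleC a (X x))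
     \<and> (\<forall>\<eta>\<in>D. \<exists>z\<in>K. \<forall>\<xi>\<in>D. cinner (X \<xi>) \<eta> = cinner \<xi> z)}"

definition dag :: "'h::chilbert_space set \<Rightarrow> 'h set \<Rightarrow> ('h \<Rightarrow> 'h) \<Rightarrow> 'h \<Rightarrow> 'h" where
  "dag K D X = (\<lambda>\<eta>. if \<eta> \<in> D then (THE z. z \<in> K \<and> (\<forall>\<xi>\<in>D. cinner (X \<xi>) \<eta> = cinner \<xi> z)) else 0)"

definition Ostar_space :: "'h::chilbert_space set \<Rightarrow> 'h set \<Rightarrow> ('h \<Rightarrow> 'h) set \<Rightarrow> bool" where
  "Ostar_space K D M \<longleftrightarrow> M \<subseteq> Ldag K D \<and> M \<noteq> {}
     \<and> (\<forall>X\<in>M. \<forall>Y\<in>M. (\<lambda>x. X x + Y x) \<in> M)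
     \<and> (\<forall>a. \<forall>X\<in>M. (\<lambda>x. scaleC a (X x)) \<in> M)
     \<and> (\<forall>X\<in>M. dag K D X \<in> M)"

definition cldom :: "'h::chilbert_space set \<Rightarrow> ('h \<Rightarrow> 'h) \<Rightarrow> 'h set" where
  "cldom D X = {x. \<exists>s. (\<forall>n. s n \<in> D) \<and> s \<longlonglongrightarrow> x \<and> convergent (\<lambda>n. X (s n))}"

definition hatD :: "'h::chilbert_space set \<Rightarrow> ('h \<Rightarrow> 'h) set \<Rightarrow> 'h set" where
  "hatD D M = (\<Inter>X\<in>M. cldom D X)"

definition fully_closed :: "'h::chilbert_space set \<Rightarrow> ('h \<Rightarrow> 'h) set \<Rightarrow> bool" where
  "fully_closed D M \<longleftrightarrow> hatD D M = D"

definition wcomm :: "'h::chilbert_space set \<Rightarrow> 'h set \<Rightarrow> ('h \<Rightarrow> 'h) set \<Rightarrow> ('h \<Rightarrow> 'h) set" where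
  "wcomm K D M = {C \<in> Bop K. \<forall>X\<in>M. \<forall>\<xi>\<in>D. \<forall>\<eta>\<in>D. cinner (C (X \<xi>)) \<eta> = cinner (C \<xi>) (dag K D X \<eta>)}"

definition wsig :: "'h::chilbert_space set \<Rightarrow> 'h set \<Rightarrow> ('h \<Rightarrow> 'h) set \<Rightarrow> ('h \<Rightarrow> 'h) set" where
  "wsig K D M = {X \<in> Ldag K D. \<forall>C\<in>wcomm K D M. \<forall>\<xi>\<in>D. \<forall>\<eta>\<in>D. cinner (C (X \<xi>)) \<eta> = cinner (C \<xi>) (dag K D X \<eta>)}"

text \<open>Reduction M_{E'} = restrictions to E'D (an O*-vector space in L-dagger(E'D, E'H)).\<close>
definition reduce :: "('h::chilbert_space \<Rightarrow> 'h) \<Rightarrow> 'h set \<Rightarrow> ('h \<Rightarrow> 'h) set \<Rightarrow> ('h \<Rightarrow> 'h) set" where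
  "reduce E D M = restr (E ` D) ` M"

definition ext_dom :: "('h::chilbert_space \<Rightarrow> 'h) set \<Rightarrow> ('h \<Rightarrow> 'h) \<Rightarrow> ('h \<Rightarrow> 'h) \<Rightarrow> 'h set \<Rightarrow> 'h set" where
  "ext_dom Cm E Z D = {u + (\<eta> - Z \<eta>) | u \<eta>. u \<in> cspan {C (E \<xi>) | C \<xi>. C \<in> Cm \<and> \<xi> \<in> D} \<and> \<eta> \<in> D}"

definition ext_op :: "('h::chilbert_space \<Rightarrow> 'h) set \<Rightarrow> ('h \<Rightarrow> 'h) \<Rightarrow> ('h \<Rightarrow> 'h) \<Rightarrow> 'h set \<Rightarrow> ('h \<Rightarrow> 'h) \<Rightarrow> 'h \<Rightarrow> 'h" where
  "ext_op Cm E Z D X = restr (ext_dom Cm E Z D) (\<lambda>v. SOME w. \<exists>(n::nat) C \<xi> \<eta>.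
      (\<forall>k<n. C k \<in> Cm \<and> \<xi> k \<in> D) \<and> \<eta> \<in> D
      \<and> v = (\<Sum>k<n. C k (E (\<xi> k))) + (\<eta> - Z \<eta>)
      \<and> w = (\<Sum>k<n. C k (X (E (\<xi> k)))))"

end

theory Submission
  imports Defs
begin

(*
  Notation: W = M'_w, E'H = range E, E'D = E ` D, M_E' = reduce E D M, and for T in
  (M_E')''_{w sigma} the operator T_e = ext_op W E Z D T on calE = span(W E'D) + (I - Z)D.

  Inclusion "subset": X in M''_{w sigma} commutes with E, so its restriction to E'D lies in
  L-dagger(E'D, E'H); every B in (M_E')'_w lifts to B E' in M'_w, and testing X against
  this lift shows that the restriction lies in (M_E')''_{w sigma}.

  Inclusion "superset": compressing C'* C (C, C' in M'_w) to E'H gives an element of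
  (M_E')'_w, whence <C T E'xi, C' E'zeta> = <C E'xi, C' T-dagger E'zeta>.  Since range Z is
  the closed span of M'_w E'H, vectors of range Z are determined by their inner products
  with M'_w E'D; so T_e is well defined and (T-dagger)_e is adjoint to T_e on calE.  The
  full-closure hypothesis provides for every xi in D a sequence in calE converging to xi
  along which T_e converges; the limit is characterised by inner products (a "weak value"),
  which yields an operator in L-dagger(D,H) commuting with M'_w and restricting to T.
*)

lemma scaleC_minus1: "scaleC (-1) (x::'a::complex_vector) = - x"
  using scaleR_scaleC[of "-1" x] by simp

lemma cinner_zero_left [simp]: "cinner 0 (y::'a::complex_inner) = 0"
proof -
  have "cinner 0 y + cinner 0 y = cinner 0 y + 0" using cinner_add_left[of 0 0 y] by simp
  thus ?thesis by (rule add_left_imp_eq)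
qed

lemma cinner_zero_right [simp]: "cinner (x::'a::complex_inner) 0 = 0"
  using cinner_commute[of x 0] by simp

lemma cinner_minus_left: "cinner (- (x::'a::complex_inner)) y = - cinner x y"
  using cinner_scaleC_left[of "-1" x y] by (simp add: scaleC_minus1)

lemma cinner_diff_left: "cinner ((x::'a::complex_inner) - y) z = cinner x z - cinner y z"
  by (simp only: cinner_add_left cinner_minus_left diff_conv_add_uminus)

lemma cinner_add_right: "cinner (x::'a::complex_inner) (y + z) = cinner x y + cinner x z"
  by (subst (1 2 3) cinner_commute) (simp add: cinner_add_left)

lemma cinner_scaleC_right: "cinner (x::'a::complex_inner) (scaleC r y) = cnj r * cinner x y"
  by (subst (1 2) cinner_commute) (simp add: cinner_scaleC_left)

lemma cinner_minus_right: "cinner (x::'a::complex_inner) (- y) = - cinner x y"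
  by (subst (1 2) cinner_commute) (simp add: cinner_minus_left)

lemma cinner_diff_right: "cinner (x::'a::complex_inner) (y - z) = cinner x y - cinner x z"
  by (simp only: cinner_add_right cinner_minus_right diff_conv_add_uminus)

lemma cinner_sum_left: "cinner (\<Sum>k\<in>A. f k) (y::'a::complex_inner) = (\<Sum>k\<in>A. cinner (f k) y)"
  by (induction A rule: infinite_finite_induct) (simp_all add: cinner_add_left)

lemma cinner_sum_right: "cinner (y::'a::complex_inner) (\<Sum>k\<in>A. f k) = (\<Sum>k\<in>A. cinner y (f k))"
  by (induction A rule: infinite_finite_induct) (simp_all add: cinner_add_right)

lemma cinner_sum_sum:
  "cinner (\<Sum>k\<in>A. f k) (\<Sum>j\<in>B. g j) = (\<Sum>k\<in>A. \<Sum>j\<in>B. cinner (f k) (g j :: 'a::complex_inner))"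
  by (subst cinner_sum_left) (simp only: cinner_sum_right)

lemma cinner_commute_zero: "cinner (x::'a::complex_inner) y = 0 \<longleftrightarrow> cinner y x = 0"
  by (metis cinner_commute complex_cnj_zero)

lemma cinner_self: "cinner (x::'a::complex_inner) x = complex_of_real ((norm x)\<^sup>2)"
proof -
  have i: "Im (cinner x x) = 0" and r: "0 \<le> Re (cinner x x)" using cinner_ge_zero by auto
  have "(norm x)\<^sup>2 = Re (cinner x x)" using norm_eq_sqrt_cinner[of x] r by simp
  thus ?thesis using i by (simp add: complex_eq_iff)
qed

lemma norm_sq_Re: "(norm (x::'a::complex_inner))\<^sup>2 = Re (cinner x x)"
  by (simp add: cinner_self)

lemma norm_scaleC: "norm (scaleC a (x::'a::complex_inner)) = cmod a * norm x"
proof -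
  have "cinner (scaleC a x) (scaleC a x) = (a * cnj a) * cinner x x"
    by (simp add: cinner_scaleC_left cinner_scaleC_right ac_simps)
  also have "\<dots> = complex_of_real ((cmod a * norm x)\<^sup>2)"
    by (simp add: complex_norm_square[symmetric] cinner_self power_mult_distrib)
  finally have "(norm (scaleC a x))\<^sup>2 = (cmod a * norm x)\<^sup>2"
    unfolding cinner_self of_real_eq_iff .
  thus ?thesis by (simp add: power2_eq_iff_nonneg)
qed

lemma cinner_ext_right: "(\<forall>x. cinner x a = cinner x b) \<Longrightarrow> a = (b::'a::complex_inner)"
  by (metis cinner_diff_right cinner_eq_zero_iff right_minus_eq)

lemma cinner_ext_left: "(\<forall>x. cinner a x = cinner b x) \<Longrightarrow> a = (b::'a::complex_inner)"
  by (metis cinner_diff_left cinner_eq_zero_iff right_minus_eq)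

text \<open>Squared distance from w to its component along m (the heart of Cauchy-Schwarz
  and of the orthogonality of best approximations).\<close>

lemma norm_sq_minus_component:
  fixes w m :: "'a::complex_inner"
  assumes "m \<noteq> 0"
  defines "t \<equiv> cinner w m / complex_of_real ((norm m)\<^sup>2)"
  shows "Re (cinner (w - scaleC t m) (w - scaleC t m)) = (norm w)\<^sup>2 - (cmod (cinner w m))\<^sup>2 / (norm m)\<^sup>2"
proof -
  define r where "r = (norm m)\<^sup>2"
  have r: "r > 0" using assms by (simp add: r_def)
  define c where "c = cinner w m"
  have cm: "cinner m w = cnj c" unfolding c_def by (rule cinner_commute)
  have "cinner (w - scaleC t m) (w - scaleC t m)
     = cinner w w - t * cinner m w - cnj t * cinner w m + t * cnj t * cinner m m"
    by (simp add: cinner_diff_left cinner_diff_right cinner_scaleC_left cinner_scaleC_right algebra_simps)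
  also have "\<dots> = complex_of_real ((norm w)\<^sup>2) - c * cnj c / complex_of_real r"
    using r by (simp add: cm c_def cinner_self r_def t_def field_simps)
  also have "c * cnj c = complex_of_real ((cmod c)\<^sup>2)"
    using complex_norm_square[of c] by simp
  finally show ?thesis unfolding c_def r_def by simp
qed

lemma cauchy_schwarz: "cmod (cinner x y) \<le> norm (x::'a::complex_inner) * norm y"
proof (cases "y = 0")
  case False
  define t where "t = cinner x y / complex_of_real ((norm y)\<^sup>2)"
  have "0 \<le> Re (cinner (x - scaleC t y) (x - scaleC t y))"
    using cinner_ge_zero by blast
  hence "(cmod (cinner x y))\<^sup>2 / (norm y)\<^sup>2 \<le> (norm x)\<^sup>2"
    using norm_sq_minus_component[OF False, of x] unfolding t_def by simp
  hence "(cmod (cinner x y))\<^sup>2 \<le> (norm x * norm y)\<^sup>2"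
    using False by (simp add: divide_le_eq power_mult_distrib)
  thus ?thesis by (simp add: power2_le_iff_abs_le)
qed simp

lemma parallelogram: "(norm ((a::'a::complex_inner) + b))\<^sup>2 + (norm (a - b))\<^sup>2 = 2 * (norm a)\<^sup>2 + 2 * (norm b)\<^sup>2"
proof -
  have "cinner (a + b) (a + b) + cinner (a - b) (a - b) = 2 * cinner a a + 2 * cinner b b"
    by (simp add: cinner_add_left cinner_add_right cinner_diff_left cinner_diff_right)
  thus ?thesis unfolding cinner_self
    by (metis (mono_tags, lifting) of_real_add of_real_eq_iff of_real_mult of_real_numeral)
qed

lemma bounded_linear_cinner_left: "bounded_linear (\<lambda>x. cinner x (y::'a::complex_inner))"
proof (rule bounded_linear_intro)
  show "cinner (scaleR r x) y = scaleR r (cinner x y)" for r x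
    by (simp add: scaleR_scaleC cinner_scaleC_left scaleR_conv_of_real)
  show "norm (cinner x y) \<le> norm x * norm y" for x
    using cauchy_schwarz by (simp add: norm_complex_def)
qed (rule cinner_add_left)

lemma bounded_linear_cinner_right: "bounded_linear (\<lambda>x. cinner (y::'a::complex_inner) x)"
proof (rule bounded_linear_intro)
  show "cinner y (scaleR r x) = scaleR r (cinner y x)" for r x
    by (simp add: scaleR_scaleC cinner_scaleC_right scaleR_conv_of_real)
  show "norm (cinner y x) \<le> norm x * norm y" for x
    using cauchy_schwarz[of y x] by (simp add: norm_complex_def mult.commute)
qed (rule cinner_add_right)

lemmas tendsto_cinner_left = bounded_linear.tendsto[OF bounded_linear_cinner_left]
lemmas tendsto_cinner_right = bounded_linear.tendsto[OF bounded_linear_cinner_right]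

lemma orthogonal_closure:
  assumes "\<forall>\<eta>\<in>S. cinner a \<eta> = 0" and "\<eta> \<in> closure S"
  shows "cinner (a::'a::complex_inner) \<eta> = 0"
proof -
  obtain s where s: "\<forall>n. s n \<in> S" "s \<longlonglongrightarrow> \<eta>" using assms(2) closure_sequential by metis
  have "(\<lambda>n. cinner a (s n)) \<longlonglongrightarrow> cinner a \<eta>" using s(2) by (rule tendsto_cinner_right)
  moreover have "(\<lambda>n. cinner a (s n)) = (\<lambda>n. 0)" using s(1) assms(1) by auto
  ultimately show ?thesis using LIMSEQ_unique[OF _ tendsto_const] by metis
qed

lemma dense_cinner_eq_left:
  assumes "closure D = UNIV" and "\<forall>\<eta>\<in>D. cinner a \<eta> = cinner b \<eta>"
  shows "a = (b::'a::complex_inner)"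
proof -
  have "cinner (a - b) (a - b) = 0"
    by (rule orthogonal_closure) (use assms in \<open>auto simp: cinner_diff_left\<close>)
  thus ?thesis by (simp add: cinner_eq_zero_iff)
qed

lemma dense_cinner_eq_right:
  assumes "closure D = UNIV" and "\<forall>\<xi>\<in>D. cinner \<xi> a = cinner \<xi> b"
  shows "a = (b::'a::complex_inner)"
  using dense_cinner_eq_left[OF assms(1)] assms(2) by (metis cinner_commute)

lemma csubspace_add: "csubspace S \<Longrightarrow> x \<in> S \<Longrightarrow> y \<in> S \<Longrightarrow> x + y \<in> S"
  unfolding csubspace_def by blast
lemma csubspace_scaleC: "csubspace S \<Longrightarrow> x \<in> S \<Longrightarrow> scaleC a x \<in> S"
  unfolding csubspace_def by blast
lemma csubspace_zero: "csubspace S \<Longrightarrow> 0 \<in> S"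
  unfolding csubspace_def by blast
lemma csubspace_scaleR: "csubspace S \<Longrightarrow> x \<in> S \<Longrightarrow> scaleR r x \<in> S"
  by (simp add: scaleR_scaleC csubspace_scaleC)
lemma csubspace_diff: "csubspace S \<Longrightarrow> x \<in> S \<Longrightarrow> y \<in> S \<Longrightarrow> x - y \<in> S"
  using csubspace_add[of S x "- y"] csubspace_scaleC[of S y "-1"] by (simp add: scaleC_minus1)
lemma csubspace_sum: "csubspace S \<Longrightarrow> (\<forall>k\<in>A. f k \<in> S) \<Longrightarrow> (\<Sum>k\<in>A. f k) \<in> S"
  by (induction A rule: infinite_finite_induct) (simp_all add: csubspace_zero csubspace_add)

lemma Bop_UNIV_iff: "C \<in> Bop UNIV \<longleftrightarrow> (\<forall>x y. C (x + y) = C x + C y)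
     \<and> (\<forall>a x. C (scaleC a x) = scaleC a (C x)) \<and> (\<exists>B. \<forall>x. norm (C x) \<le> B * norm x)"
  unfolding Bop_def by auto

lemma Bop_add: "C \<in> Bop K \<Longrightarrow> x \<in> K \<Longrightarrow> y \<in> K \<Longrightarrow> C (x + y) = C x + C y"
  unfolding Bop_def by blast
lemma Bop_scaleC: "C \<in> Bop K \<Longrightarrow> x \<in> K \<Longrightarrow> C (scaleC a x) = scaleC a (C x)"
  unfolding Bop_def by blast
lemma Bop_into: "C \<in> Bop K \<Longrightarrow> x \<in> K \<Longrightarrow> C x \<in> K"
  unfolding Bop_def by blast
lemma Bop_bound: "C \<in> Bop K \<Longrightarrow> \<exists>B. \<forall>x\<in>K. norm (C x) \<le> B * norm x"
  unfolding Bop_def by blast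

text \<open>Operators in B(H) are bounded real-linear maps, so the library's facts on linearity
  and continuity apply to them.\<close>

lemma Bop_bounded_linear:
  assumes "C \<in> Bop UNIV" shows "bounded_linear C"
proof -
  obtain B where B: "\<forall>x. norm (C x) \<le> B * norm x" using Bop_bound[OF assms] by auto
  show ?thesis
  proof (rule bounded_linear_intro)
    show "C (x + y) = C x + C y" for x y using assms by (simp add: Bop_add)
    show "C (scaleR r x) = scaleR r (C x)" for r x using assms by (simp add: scaleR_scaleC Bop_scaleC)
    show "norm (C x) \<le> norm x * B" for x using B by (simp add: mult.commute)
  qed
qed

lemma Bop_zero [simp]: "C \<in> Bop UNIV \<Longrightarrow> C 0 = 0"
  using Bop_bounded_linear bounded_linear.linear linear_0 by blast
lemma Bop_diff: "C \<in> Bop UNIV \<Longrightarrow> C (x - y) = C x - C y"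
  using Bop_bounded_linear bounded_linear.linear linear_diff by blast
lemma Bop_sum: "C \<in> Bop UNIV \<Longrightarrow> C (\<Sum>k\<in>A. f k) = (\<Sum>k\<in>A. C (f k))"
  using Bop_bounded_linear bounded_linear.linear linear_sum by blast
lemma Bop_tendsto: "C \<in> Bop UNIV \<Longrightarrow> s \<longlonglongrightarrow> x \<Longrightarrow> (\<lambda>n. C (s n)) \<longlonglongrightarrow> C x"
  using Bop_bounded_linear bounded_linear.tendsto by blast

lemma Bop_comp:
  assumes "C \<in> Bop UNIV" and "C' \<in> Bop UNIV" shows "(\<lambda>x. C (C' x)) \<in> Bop UNIV"
proof -
  have "bounded_linear (\<lambda>x. C (C' x))"
    using bounded_linear_compose[OF Bop_bounded_linear[OF assms(1)] Bop_bounded_linear[OF assms(2)]] .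
  then obtain K where K: "\<forall>x. norm (C (C' x)) \<le> norm x * K"
    using bounded_linear.bounded by blast
  show ?thesis unfolding Bop_UNIV_iff
    using assms K by (auto simp: Bop_add Bop_scaleC mult.commute)
qed

section \<open>The Riesz representation theorem\<close>

text \<open>Parallelogram estimate: if a, b in N are within d + s and d + t of x, where d is
  a lower bound for the distance from x to N, then a and b are close to each other
  (their midpoint also lies in N).\<close>

lemma near_minimizers_close:
  fixes x :: "'a::complex_inner"
  assumes N: "csubspace N" and d: "0 \<le> d" and dle: "\<forall>n\<in>N. d \<le> norm (x - n)"
    and ab: "a \<in> N" "b \<in> N" and sa: "norm (x - a) \<le> d + s" and tb: "norm (x - b) \<le> d + t"
  shows "(norm (a - b))\<^sup>2 \<le> 4 * d * s + 2 * s ^ 2 + 4 * d * t + 2 * t ^ 2"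
proof -
  have mid: "scaleR (1/2) (a + b) \<in> N" using N ab by (simp add: csubspace_add csubspace_scaleR)
  have "(x - a) + (x - b) = scaleR 2 (x - scaleR (1/2) (a + b))" by (simp add: algebra_simps scaleR_2)
  hence "2 * d \<le> norm ((x - a) + (x - b))" using dle mid by auto
  hence "(2*d)\<^sup>2 \<le> (norm ((x - a) + (x - b)))\<^sup>2" by (rule power_mono) (use d in simp)
  moreover have "(norm ((x - a) - (x - b)))\<^sup>2 = (norm (a - b))\<^sup>2" by (simp add: norm_minus_commute)
  moreover have "(norm (x - a))\<^sup>2 \<le> (d + s)\<^sup>2" "(norm (x - b))\<^sup>2 \<le> (d + t)\<^sup>2"
    using sa tb by (auto intro: power_mono)
  ultimately have "(norm (a - b))\<^sup>2 \<le> 2*(d + s)\<^sup>2 + 2*(d + t)\<^sup>2 - (2*d)\<^sup>2"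
    using parallelogram[of "x - a" "x - b"] by linarith
  thus ?thesis by (simp add: power2_eq_square algebra_simps)
qed

lemma minimizing_sequence_Cauchy:
  fixes x :: "'a::complex_inner"
  assumes N: "csubspace N" and d: "0 \<le> d" and dle: "\<forall>n\<in>N. d \<le> norm (x - n)"
    and p: "\<And>k. p k \<in> N" "\<And>k. norm (x - p k) < d + inverse (real (Suc k))"
  shows "Cauchy p"
proof (rule metric_CauchyI)
  define e where "e k = inverse (real (Suc k))" for k
  have e0: "0 < e k" "e k \<le> 1" for k unfolding e_def by (auto simp: field_simps)
  have est: "(norm (p j - p k))\<^sup>2 \<le> (4*d+2) * (e j + e k)" for j k
  proof -
    have "(norm (p j - p k))\<^sup>2 \<le> 4*d*e j + 2*(e j)\<^sup>2 + 4*d*e k + 2*(e k)\<^sup>2"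
      using p unfolding e_def by (intro near_minimizers_close[OF N d dle] less_imp_le)
    moreover have "(e j)\<^sup>2 \<le> e j" "(e k)\<^sup>2 \<le> e k"
      using e0 by (auto simp: power2_eq_square mult_le_cancel_left1)
    ultimately show ?thesis by (simp add: algebra_simps)
  qed
  fix eps :: real assume eps: "eps > 0"
  obtain K where K: "inverse (real (Suc K)) < eps\<^sup>2 / (2*(4*d+2))"
    using reals_Archimedean[of "eps\<^sup>2 / (2*(4*d+2))"] eps d by (auto simp: field_simps)
  show "\<exists>M. \<forall>m\<ge>M. \<forall>n\<ge>M. dist (p m) (p n) < eps"
  proof (intro exI allI impI)
    fix j k assume jk: "K \<le> j" "K \<le> k"
    have "e j \<le> inverse (real (Suc K))" "e k \<le> inverse (real (Suc K))"
      unfolding e_def using jk by (auto simp: field_simps)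
    hence "(4*d+2) * (e j + e k) \<le> (4*d+2) * (2 * inverse (real (Suc K)))"
      using d by (intro mult_left_mono) auto
    also have "\<dots> < (4*d+2) * (2 * (eps\<^sup>2 / (2*(4*d+2))))"
      using K d by (intro mult_strict_left_mono) auto
    also have "\<dots> = eps\<^sup>2" using d by (simp add: field_simps)
    finally have "(norm (p j - p k))\<^sup>2 < eps\<^sup>2" using est[of j k] by linarith
    hence "norm (p j - p k) < eps" by (rule power_less_imp_less_base) (use eps in simp)
    thus "dist (p j) (p k) < eps" by (simp add: dist_norm)
  qed
qed

lemma best_approximation_exists:
  fixes x :: "'a::chilbert_space"
  assumes N: "csubspace N" "closed N"
  shows "\<exists>q\<in>N. \<forall>n\<in>N. norm (x - q) \<le> norm (x - n)"
proof -
  define d where "d = Inf ((\<lambda>n. norm (x - n)) ` N)"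
  have ne: "(\<lambda>n. norm (x - n)) ` N \<noteq> {}" using csubspace_zero[OF N(1)] by auto
  have bdd: "bdd_below ((\<lambda>n. norm (x - n)) ` N)" by (rule bdd_belowI[of _ 0]) auto
  have dle: "\<forall>n\<in>N. d \<le> norm (x - n)" unfolding d_def using bdd by (simp add: cInf_lower)
  have d0: "0 \<le> d" unfolding d_def using ne by (intro cInf_greatest) auto
  have "\<exists>n\<in>N. norm (x - n) < d + inverse (real (Suc k))" for k
  proof -
    have "Inf ((\<lambda>n. norm (x - n)) ` N) < d + inverse (real (Suc k))" unfolding d_def[symmetric] by simp
    thus ?thesis using cInf_lessD[OF ne] by blast
  qed
  then obtain p where p: "\<And>k. p k \<in> N" "\<And>k. norm (x - p k) < d + inverse (real (Suc k))"
    by metis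
  have "Cauchy p" by (rule minimizing_sequence_Cauchy[OF N(1) d0 dle p])
  then obtain q where q: "p \<longlonglongrightarrow> q" using Cauchy_convergent convergent_def by blast
  have qN: "q \<in> N" using closed_sequentially[OF N(2) p(1) q] .
  have "norm (x - q) \<le> d + 0"
  proof (rule LIMSEQ_le)
    show "(\<lambda>k. norm (x - p k)) \<longlonglongrightarrow> norm (x - q)" by (intro tendsto_intros q)
    show "(\<lambda>k. d + inverse (real (Suc k))) \<longlonglongrightarrow> d + 0"
      by (intro tendsto_add tendsto_const LIMSEQ_inverse_real_of_nat)
    show "\<exists>N. \<forall>k\<ge>N. norm (x - p k) \<le> d + inverse (real (Suc k))"
      using p(2) less_imp_le by blast
  qed
  thus ?thesis using qN dle by force
qed

lemma best_approximation_orthogonal: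
  fixes x :: "'a::complex_inner"
  assumes N: "csubspace N" and q: "q \<in> N" "\<forall>n\<in>N. norm (x - q) \<le> norm (x - n)" and m: "m \<in> N"
  shows "cinner (x - q) m = 0"
proof (cases "m = 0")
  case False
  define t where "t = cinner (x - q) m / complex_of_real ((norm m)\<^sup>2)"
  have "q + scaleC t m \<in> N" using N q(1) m by (simp add: csubspace_add csubspace_scaleC)
  hence "norm (x - q) \<le> norm ((x - q) - scaleC t m)" using q(2) by (metis diff_diff_eq)
  hence "(norm (x - q))\<^sup>2 \<le> (norm ((x - q) - scaleC t m))\<^sup>2" by (rule power_mono) simp
  also have "\<dots> = Re (cinner ((x - q) - scaleC t m) ((x - q) - scaleC t m))" by (rule norm_sq_Re)
  also have "\<dots> = (norm (x - q))\<^sup>2 - (cmod (cinner (x - q) m))\<^sup>2 / (norm m)\<^sup>2"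
    unfolding t_def by (rule norm_sq_minus_component[OF False])
  finally have "(cmod (cinner (x - q) m))\<^sup>2 \<le> 0" using False by (simp add: divide_le_0_iff)
  thus ?thesis by simp
qed simp

lemma functional_bounded_linear:
  fixes f :: "'a::complex_inner \<Rightarrow> complex"
  assumes add: "\<forall>x y. f (x + y) = f x + f y" and hom: "\<forall>a x. f (scaleC a x) = a * f x"
    and bnd: "\<exists>B. \<forall>x. cmod (f x) \<le> B * norm x"
  shows "bounded_linear f"
proof -
  obtain B where B: "\<forall>x. cmod (f x) \<le> B * norm x" using bnd by auto
  show ?thesis
  proof (rule bounded_linear_intro)
    show "f (scaleR r x) = scaleR r (f x)" for r x using hom by (simp add: scaleR_scaleC scaleR_conv_of_real)
    show "norm (f x) \<le> norm x * B" for x using B by (simp add: mult.commute)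
  qed (use add in blast)
qed

lemma functional_kernel:
  fixes f :: "'a::complex_inner \<Rightarrow> complex"
  assumes lin: "bounded_linear f" and hom: "\<forall>a x. f (scaleC a x) = a * f x"
  shows "csubspace {x. f x = 0}" and "closed {x. f x = 0}"
proof -
  show "csubspace {x. f x = 0}"
    using hom linear_add[OF bounded_linear.linear[OF lin]] linear_0[OF bounded_linear.linear[OF lin]]
    unfolding csubspace_def by simp
  show "closed {x. f x = 0}"
    by (intro closed_Collect_eq linear_continuous_on[OF lin] continuous_on_const)
qed

theorem riesz_representation:
  fixes f :: "'a::chilbert_space \<Rightarrow> complex"
  assumes add: "\<forall>x y. f (x + y) = f x + f y" and hom: "\<forall>a x. f (scaleC a x) = a * f x"
    and bnd: "\<exists>B. \<forall>x. cmod (f x) \<le> B * norm x"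
  shows "\<exists>z. \<forall>x. f x = cinner x z"
proof (cases "\<forall>x. f x = 0")
  case False
  then obtain x0 where fx0: "f x0 \<noteq> 0" by auto
  have lin: "bounded_linear f" by (rule functional_bounded_linear[OF add hom bnd])
  define N where "N = {x. f x = 0}"
  have N: "csubspace N" "closed N" unfolding N_def using functional_kernel[OF lin hom] by auto
  obtain q where q: "q \<in> N" "\<forall>n\<in>N. norm (x0 - q) \<le> norm (x0 - n)"
    using best_approximation_exists[OF N] by blast
  define w where "w = x0 - q"
  have fw: "f w = f x0"
    using q(1) linear_diff[OF bounded_linear.linear[OF lin]] unfolding w_def N_def by simp
  have ww: "cinner w w \<noteq> 0" using fx0 fw cinner_eq_zero_iff[of w] by (auto simp: linear_0[OF bounded_linear.linear[OF lin]])
  have wwr: "cnj (cinner w w) = cinner w w" by (metis cinner_commute)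
  show ?thesis
  proof (intro exI allI)
    fix x
    have "scaleC (f x) w - scaleC (f w) x \<in> N"
      using linear_diff[OF bounded_linear.linear[OF lin]] hom unfolding N_def by simp
    hence "cinner w (scaleC (f x) w - scaleC (f w) x) = 0"
      using best_approximation_orthogonal[OF N(1) q] cinner_commute_zero unfolding w_def by blast
    hence "cinner (scaleC (f x) w - scaleC (f w) x) w = 0" using cinner_commute_zero by blast
    hence "f x * cinner w w = f w * cinner x w" by (simp add: cinner_diff_left cinner_scaleC_left)
    hence "f x = f w / cnj (cinner w w) * cinner x w" using ww wwr by (simp add: field_simps)
    thus "f x = cinner x (scaleC (cnj (f w) / cinner w w) w)" by (simp add: cinner_scaleC_right)
  qed
qed (auto intro: exI[of _ 0])

definition adj :: "('a::chilbert_space \<Rightarrow> 'a) \<Rightarrow> 'a \<Rightarrow> 'a" where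
  "adj C y = (SOME z. \<forall>x. cinner (C x) y = cinner x z)"

lemma cinner_adj: assumes "C \<in> Bop UNIV" shows "cinner (C x) y = cinner x (adj C y)"
proof -
  obtain B where B: "\<forall>x. norm (C x) \<le> B * norm x" using Bop_bound[OF assms] by auto
  have "\<exists>z. \<forall>x. cinner (C x) y = cinner x z"
  proof (rule riesz_representation)
    show "\<forall>x x'. cinner (C (x + x')) y = cinner (C x) y + cinner (C x') y"
      using assms by (simp add: Bop_add cinner_add_left)
    show "\<forall>a x. cinner (C (scaleC a x)) y = a * cinner (C x) y"
      using assms by (simp add: Bop_scaleC cinner_scaleC_left)
    have "cmod (cinner (C x) y) \<le> (B * norm y) * norm x" for x
      using cauchy_schwarz[of "C x" y] B mult_right_mono[of "norm (C x)" "B * norm x" "norm y"]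
      by (simp add: algebra_simps)
    thus "\<exists>B. \<forall>x. cmod (cinner (C x) y) \<le> B * norm x" by blast
  qed
  then show ?thesis unfolding adj_def by (rule someI_ex[where P="\<lambda>z. \<forall>x. cinner (C x) y = cinner x z", THEN spec])
qed

lemma cinner_adj_left: "C \<in> Bop UNIV \<Longrightarrow> cinner (adj C y) x = cinner y (C x)"
  by (metis cinner_adj cinner_commute)

lemma adj_Bop: assumes "C \<in> Bop UNIV" shows "adj C \<in> Bop UNIV"
proof -
  obtain B where B: "\<forall>x. norm (C x) \<le> B * norm x" using Bop_bound[OF assms] by auto
  have "norm (adj C y) \<le> max B 0 * norm y" for y
  proof (cases "adj C y = 0")
    case False
    have "(norm (adj C y))\<^sup>2 = Re (cinner (C (adj C y)) y)" by (simp add: cinner_adj[OF assms] norm_sq_Re)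
    also have "\<dots> \<le> norm (C (adj C y)) * norm y"
      using complex_Re_le_cmod cauchy_schwarz order_trans by blast
    also have "\<dots> \<le> (max B 0 * norm (adj C y)) * norm y"
      using B[rule_format, of "adj C y"]
      by (intro mult_right_mono) (auto intro: order_trans[OF _ mult_right_mono])
    finally have "norm (adj C y) * norm (adj C y) \<le> (max B 0 * norm y) * norm (adj C y)"
      by (simp add: power2_eq_square algebra_simps)
    thus ?thesis using False by simp
  qed simp
  moreover have "adj C (x + y) = adj C x + adj C y" for x y
    by (rule cinner_ext_right) (simp add: cinner_adj[OF assms, symmetric] cinner_add_right)
  moreover have "adj C (scaleC a x) = scaleC a (adj C x)" for a x
    by (rule cinner_ext_right) (simp add: cinner_adj[OF assms, symmetric] cinner_scaleC_right)
  ultimately show ?thesis unfolding Bop_UNIV_iff by blast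
qed

section \<open>Densely defined operators and their adjoints\<close>

text \<open>D separates the points of K by inner products; this is what makes the adjoint
  X-dagger of an operator with domain D and values in K unique (for K = H it is density
  of D).\<close>

definition separating :: "'h::complex_inner set \<Rightarrow> 'h set \<Rightarrow> bool" where
  "separating K D \<longleftrightarrow> (\<forall>z1\<in>K. \<forall>z2\<in>K. (\<forall>\<xi>\<in>D. cinner \<xi> z1 = cinner \<xi> z2) \<longrightarrow> z1 = z2)"

lemma dense_separating: "closure D = UNIV \<Longrightarrow> separating UNIV D"
  unfolding separating_def using dense_cinner_eq_right by blast

lemma Ldag_out: "X \<in> Ldag K D \<Longrightarrow> x \<notin> D \<Longrightarrow> X x = 0"
  unfolding Ldag_def by blast
lemma Ldag_into: "X \<in> Ldag K D \<Longrightarrow> x \<in> D \<Longrightarrow> X x \<in> K"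
  unfolding Ldag_def by blast
lemma Ldag_add: "X \<in> Ldag K D \<Longrightarrow> x \<in> D \<Longrightarrow> y \<in> D \<Longrightarrow> X (x + y) = X x + X y"
  unfolding Ldag_def by blast
lemma Ldag_scaleC: "X \<in> Ldag K D \<Longrightarrow> x \<in> D \<Longrightarrow> X (scaleC a x) = scaleC a (X x)"
  unfolding Ldag_def by blast

lemma LdagI:
  assumes "\<forall>x. x \<notin> D \<longrightarrow> X x = 0" "\<forall>x\<in>D. X x \<in> K" "\<forall>x\<in>D. \<forall>y\<in>D. X (x + y) = X x + X y"
    "\<forall>a. \<forall>x\<in>D. X (scaleC a x) = scaleC a (X x)"
    "\<forall>\<eta>\<in>D. \<exists>z\<in>K. \<forall>\<xi>\<in>D. cinner (X \<xi>) \<eta> = cinner \<xi> z"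
  shows "X \<in> Ldag K D"
  unfolding Ldag_def using assms by blast

lemma dag_unique:
  assumes "separating K D" "\<eta> \<in> D" "z \<in> K" "\<forall>\<xi>\<in>D. cinner (X \<xi>) \<eta> = cinner \<xi> z"
  shows "dag K D X \<eta> = z"
proof -
  have "(THE z. z \<in> K \<and> (\<forall>\<xi>\<in>D. cinner (X \<xi>) \<eta> = cinner \<xi> z)) = z"
  proof (rule the_equality)
    fix z' assume "z' \<in> K \<and> (\<forall>\<xi>\<in>D. cinner (X \<xi>) \<eta> = cinner \<xi> z')"
    thus "z' = z" using assms unfolding separating_def by auto
  qed (use assms in blast)
  thus ?thesis unfolding dag_def using assms(2) by simp
qed

lemma dag_in:
  assumes "X \<in> Ldag K D" "separating K D" "\<eta> \<in> D"
  shows "dag K D X \<eta> \<in> K" and "\<forall>\<xi>\<in>D. cinner (X \<xi>) \<eta> = cinner \<xi> (dag K D X \<eta>)"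
proof -
  obtain z where z: "z \<in> K" "\<forall>\<xi>\<in>D. cinner (X \<xi>) \<eta> = cinner \<xi> z"
    using assms(1,3) unfolding Ldag_def by blast
  have "dag K D X \<eta> = z" by (rule dag_unique[OF assms(2,3) z])
  thus "dag K D X \<eta> \<in> K" "\<forall>\<xi>\<in>D. cinner (X \<xi>) \<eta> = cinner \<xi> (dag K D X \<eta>)" using z by auto
qed

lemmas dag_into = dag_in(1) and dag_adjoint = dag_in(2)[rule_format]

lemma dag_Ldag:
  assumes X: "X \<in> Ldag K D" and sep: "separating K D" and sK: "csubspace K" and sD: "csubspace D"
  shows "dag K D X \<in> Ldag K D"
proof (rule LdagI)
  show "\<forall>x. x \<notin> D \<longrightarrow> dag K D X x = 0" by (simp add: dag_def)
  show "\<forall>x\<in>D. dag K D X x \<in> K" using dag_into[OF X sep] by blast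
  show "\<forall>x\<in>D. \<forall>y\<in>D. dag K D X (x + y) = dag K D X x + dag K D X y"
  proof (intro ballI)
    fix x y assume xy: "x \<in> D" "y \<in> D"
    show "dag K D X (x + y) = dag K D X x + dag K D X y"
      using xy dag_into[OF X sep] dag_adjoint[OF X sep]
      by (intro dag_unique[OF sep] csubspace_add[OF sD] csubspace_add[OF sK] ballI)
         (simp_all add: cinner_add_right)
  qed
  show "\<forall>a. \<forall>x\<in>D. dag K D X (scaleC a x) = scaleC a (dag K D X x)"
  proof (intro allI ballI)
    fix a x assume x: "x \<in> D"
    show "dag K D X (scaleC a x) = scaleC a (dag K D X x)"
      using x dag_into[OF X sep] dag_adjoint[OF X sep]
      by (intro dag_unique[OF sep] csubspace_scaleC[OF sD] csubspace_scaleC[OF sK] ballI)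
         (simp_all add: cinner_scaleC_right)
  qed
  show "\<forall>\<eta>\<in>D. \<exists>z\<in>K. \<forall>\<xi>\<in>D. cinner (dag K D X \<xi>) \<eta> = cinner \<xi> z"
  proof (intro ballI bexI)
    fix \<eta> \<xi> assume "\<eta> \<in> D" "\<xi> \<in> D"
    thus "cinner (dag K D X \<xi>) \<eta> = cinner \<xi> (X \<eta>)"
      using dag_adjoint[OF X sep, of \<xi> \<eta>] by (metis cinner_commute)
  qed (rule Ldag_into[OF X])
qed

lemma dag_dag:
  assumes X: "X \<in> Ldag K D" and sep: "separating K D"
  shows "dag K D (dag K D X) = X"
proof
  fix \<eta> show "dag K D (dag K D X) \<eta> = X \<eta>"
  proof (cases "\<eta> \<in> D")
    case True
    have "\<forall>\<xi>\<in>D. cinner (dag K D X \<xi>) \<eta> = cinner \<xi> (X \<eta>)"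
      using dag_adjoint[OF X sep _ True] by (metis cinner_commute)
    thus ?thesis by (rule dag_unique[OF sep True Ldag_into[OF X True]])
  qed (simp add: dag_def Ldag_out[OF X])
qed

lemma restr_in: "x \<in> S \<Longrightarrow> restr S X x = X x"
  unfolding restr_def by simp
lemma restr_out: "x \<notin> S \<Longrightarrow> restr S X x = 0"
  unfolding restr_def by simp

lemma proj_Bop: "is_proj P \<Longrightarrow> P \<in> Bop UNIV"
  unfolding is_proj_def by blast
lemma proj_idem: "is_proj P \<Longrightarrow> P (P x) = P x"
  unfolding is_proj_def by blast
lemma proj_selfadjoint: "is_proj P \<Longrightarrow> cinner (P x) y = cinner x (P y)"
  unfolding is_proj_def by blast
lemma proj_range: "is_proj P \<Longrightarrow> x \<in> range P \<longleftrightarrow> P x = x"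
  using proj_idem by (metis rangeE rangeI)

lemma proj_range_csubspace: "is_proj P \<Longrightarrow> csubspace (range P)"
  unfolding csubspace_def proj_range using proj_Bop[of P] by (simp add: Bop_add Bop_scaleC proj_idem)

lemma proj_orthogonal:
  assumes P: "is_proj P" and p: "p \<in> range P" shows "cinner p (q - P q) = 0"
proof -
  have "cinner p (q - P q) = cinner (P p) (q - P q)" using p proj_range[OF P] by simp
  also have "\<dots> = cinner p (P q - P (P q))" by (simp add: proj_selfadjoint[OF P] Bop_diff[OF proj_Bop[OF P]])
  finally show ?thesis by (simp add: proj_idem[OF P])
qed

locale reduction_setting =
  fixes D :: "'h::chilbert_space set"
    and M :: "('h \<Rightarrow> 'h) set"
    and E :: "'h \<Rightarrow> 'h"
  assumes D_subspace: "csubspace D"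
    and D_dense: "closure D = UNIV"
    and M_Ostar: "Ostar_space UNIV D M"
    and comm_inv: "\<forall>C\<in>wcomm UNIV D M. C ` D \<subseteq> D"
    and E_comm: "E \<in> wcomm UNIV D M"
    and E_proj: "is_proj E"
begin

abbreviation "W \<equiv> wcomm UNIV D M"
abbreviation "HE \<equiv> range E"
abbreviation "DE \<equiv> E ` D"
abbreviation "ME \<equiv> reduce E D M"
abbreviation "WE \<equiv> wcomm HE DE ME"
abbreviation "SE \<equiv> wsig HE DE ME"
abbreviation "dagD \<equiv> dag UNIV D"
abbreviation "dagE \<equiv> dag HE DE"

lemma E_Bop: "E \<in> Bop UNIV"
  using E_proj by (rule proj_Bop)
lemma E_idem [simp]: "E (E x) = E x"
  using E_proj by (rule proj_idem)
lemma E_selfadjoint: "cinner (E x) y = cinner x (E y)"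
  using E_proj by (rule proj_selfadjoint)
lemma HE_iff: "x \<in> HE \<longleftrightarrow> E x = x"
  using E_proj by (rule proj_range)
lemma HE_csubspace: "csubspace HE"
  using E_proj by (rule proj_range_csubspace)

lemma cinner_HE_right: "k \<in> HE \<Longrightarrow> cinner y k = cinner (E y) k"
  using HE_iff[of k] E_selfadjoint[of y k] by simp
lemma cinner_HE_left: "k \<in> HE \<Longrightarrow> cinner k y = cinner k (E y)"
  using HE_iff[of k] E_selfadjoint[of k y] by simp

lemma W_Bop: "C \<in> W \<Longrightarrow> C \<in> Bop UNIV"
  unfolding wcomm_def by blast
lemma W_cond: "C \<in> W \<Longrightarrow> X \<in> M \<Longrightarrow> \<xi> \<in> D \<Longrightarrow> \<eta> \<in> D \<Longrightarrow> cinner (C (X \<xi>)) \<eta> = cinner (C \<xi>) (dagD X \<eta>)"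
  unfolding wcomm_def by blast
lemma W_D: "C \<in> W \<Longrightarrow> \<xi> \<in> D \<Longrightarrow> C \<xi> \<in> D"
  using comm_inv by blast
lemma W_intro:
  "C \<in> Bop UNIV \<Longrightarrow> (\<And>X \<xi> \<eta>. X \<in> M \<Longrightarrow> \<xi> \<in> D \<Longrightarrow> \<eta> \<in> D \<Longrightarrow> cinner (C (X \<xi>)) \<eta> = cinner (C \<xi>) (dagD X \<eta>))
   \<Longrightarrow> C \<in> W"
  unfolding wcomm_def by blast

lemma M_Ldag: "X \<in> M \<Longrightarrow> X \<in> Ldag UNIV D"
  using M_Ostar unfolding Ostar_space_def by blast
lemma M_dag: "X \<in> M \<Longrightarrow> dagD X \<in> M"
  using M_Ostar unfolding Ostar_space_def by blast

lemma D_separating: "separating UNIV D"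
  using D_dense by (rule dense_separating)

lemma dagD_adjoint: "X \<in> Ldag UNIV D \<Longrightarrow> \<xi> \<in> D \<Longrightarrow> \<eta> \<in> D \<Longrightarrow> cinner (X \<xi>) \<eta> = cinner \<xi> (dagD X \<eta>)"
  using dag_adjoint[OF _ D_separating] by blast

lemma DE_sub_D: "DE \<subseteq> D"
  using comm_inv E_comm by blast

lemma DE_csubspace: "csubspace DE"
proof -
  have "0 \<in> DE" using csubspace_zero[OF D_subspace] Bop_zero[OF E_Bop] by (metis image_eqI)
  moreover have "x + y \<in> DE" if xy: "x \<in> DE" "y \<in> DE" for x y
  proof -
    obtain \<xi> \<zeta> where "\<xi> \<in> D" "\<zeta> \<in> D" "x = E \<xi>" "y = E \<zeta>" using xy by blast
    thus ?thesis using Bop_add[OF E_Bop, of \<xi> \<zeta>] csubspace_add[OF D_subspace]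
      by (metis UNIV_I image_eqI)
  qed
  moreover have "scaleC a x \<in> DE" if x: "x \<in> DE" for x a
  proof -
    obtain \<xi> where "\<xi> \<in> D" "x = E \<xi>" using x by blast
    thus ?thesis using Bop_scaleC[OF E_Bop, of \<xi> a] csubspace_scaleC[OF D_subspace]
      by (metis UNIV_I image_eqI)
  qed
  ultimately show ?thesis unfolding csubspace_def by blast
qed

lemma DE_separating: "separating HE DE"
  unfolding separating_def
proof (intro ballI impI)
  fix z1 z2 assume z: "z1 \<in> HE" "z2 \<in> HE" and h: "\<forall>\<xi>\<in>DE. cinner \<xi> z1 = cinner \<xi> z2"
  have "cinner x z1 = cinner x z2" if "x \<in> D" for x
  proof -
    have "cinner x z1 = cinner (E x) z1" by (rule cinner_HE_right[OF z(1)])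
    also have "\<dots> = cinner (E x) z2" using h that by blast
    also have "\<dots> = cinner x z2" by (rule cinner_HE_right[OF z(2), symmetric])
    finally show ?thesis .
  qed
  thus "z1 = z2" using dense_cinner_eq_right[OF D_dense] by blast
qed

text \<open>An operator satisfying the defining identity of the weak commutant against an
  operator C preserving D commutes with C.  This applies both to X in M and to X in
  the bicommutant M''_{w sigma}.\<close>

lemma weak_commutation:
  assumes X: "X \<in> Ldag UNIV D" and \<xi>: "\<xi> \<in> D" and C\<xi>: "C \<xi> \<in> D"
    and cond: "\<forall>\<eta>\<in>D. cinner (C (X \<xi>)) \<eta> = cinner (C \<xi>) (dagD X \<eta>)"
  shows "C (X \<xi>) = X (C \<xi>)"
  using cond dagD_adjoint[OF X C\<xi>] by (intro dense_cinner_eq_left[OF D_dense]) simp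

lemma W_comm: assumes C: "C \<in> W" and X: "X \<in> M" and \<xi>: "\<xi> \<in> D" shows "C (X \<xi>) = X (C \<xi>)"
  by (rule weak_commutation[where C = C, OF M_Ldag[OF X] \<xi> W_D[OF C \<xi>]]) (use W_cond[OF C X \<xi>] in blast)

lemma M_E: "X \<in> M \<Longrightarrow> \<xi> \<in> D \<Longrightarrow> E (X \<xi>) = X (E \<xi>)"
  using W_comm[OF E_comm] by blast

lemma M_maps_DE_to_HE: assumes X: "X \<in> M" and a: "a \<in> DE" shows "X a \<in> HE"
proof -
  obtain \<xi> where "\<xi> \<in> D" "a = E \<xi>" using a by blast
  hence "X a = E (X \<xi>)" using M_E[OF X] by simp
  thus ?thesis by simp
qed

lemma W_id: "(\<lambda>x. x) \<in> W"
proof (rule W_intro)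
  show "(\<lambda>x. x) \<in> Bop UNIV" unfolding Bop_UNIV_iff by (auto intro: exI[of _ 1])
qed (rule dagD_adjoint[OF M_Ldag])

lemma W_comp: assumes "C \<in> W" "C' \<in> W" shows "(\<lambda>x. C (C' x)) \<in> W"
proof (rule W_intro)
  show "(\<lambda>x. C (C' x)) \<in> Bop UNIV" using Bop_comp W_Bop assms by blast
  fix X \<xi> \<eta> assume X: "X \<in> M" and x: "\<xi> \<in> D" and e: "\<eta> \<in> D"
  have "C (C' (X \<xi>)) = C (X (C' \<xi>))" using W_comm[OF assms(2) X x] by simp
  thus "cinner (C (C' (X \<xi>))) \<eta> = cinner (C (C' \<xi>)) (dagD X \<eta>)"
    using W_cond[OF assms(1) X W_D[OF assms(2) x] e] by simp
qed

lemma W_scale: assumes "C \<in> W" shows "(\<lambda>x. scaleC a (C x)) \<in> W"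
proof (rule W_intro)
  have C: "C \<in> Bop UNIV" using W_Bop[OF assms] .
  then obtain B where B: "\<forall>x. norm (C x) \<le> B * norm x" using Bop_bound by fastforce
  show "(\<lambda>x. scaleC a (C x)) \<in> Bop UNIV" unfolding Bop_UNIV_iff
  proof (intro conjI allI exI)
    fix x show "norm (scaleC a (C x)) \<le> (cmod a * B) * norm x"
      using B mult_left_mono[of "norm (C x)" "B * norm x" "cmod a"] by (simp add: norm_scaleC mult.assoc)
  qed (use C in \<open>simp_all add: Bop_add Bop_scaleC scaleC_add_right scaleC_scaleC mult.commute\<close>)
  fix X \<xi> \<eta> assume "X \<in> M" "\<xi> \<in> D" "\<eta> \<in> D"
  thus "cinner (scaleC a (C (X \<xi>))) \<eta> = cinner (scaleC a (C \<xi>)) (dagD X \<eta>)"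
    using W_cond[OF assms] by (simp add: cinner_scaleC_left)
qed

lemma W_adj: assumes "C \<in> W" shows "adj C \<in> W"
proof (rule W_intro)
  have C: "C \<in> Bop UNIV" using W_Bop[OF assms] .
  show "adj C \<in> Bop UNIV" using C by (rule adj_Bop)
  fix X \<xi> \<eta> assume X: "X \<in> M" and x: "\<xi> \<in> D" and e: "\<eta> \<in> D"
  have "cinner (adj C (X \<xi>)) \<eta> = cinner (X \<xi>) (C \<eta>)" using cinner_adj_left[OF C] by blast
  also have "\<dots> = cnj (cinner (C \<eta>) (dagD (dagD X) \<xi>))"
    using dag_dag[OF M_Ldag[OF X] D_separating] by (simp add: cinner_commute[of "X \<xi>"])
  also have "\<dots> = cnj (cinner (C (dagD X \<eta>)) \<xi>)" using W_cond[OF assms M_dag[OF X] e x] by simp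
  also have "\<dots> = cinner (adj C \<xi>) (dagD X \<eta>)" by (simp add: cinner_commute[of \<xi>] cinner_adj_left[OF C])
  finally show "cinner (adj C (X \<xi>)) \<eta> = cinner (adj C \<xi>) (dagD X \<eta>)" .
qed

end

context reduction_setting
begin

lemma restrict_Ldag:
  assumes X: "X \<in> Ldag UNIV D" and XE: "\<forall>\<xi>\<in>D. E (X \<xi>) = X (E \<xi>)"
  shows "restr DE X \<in> Ldag HE DE" and "\<forall>b\<in>DE. dagE (restr DE X) b = E (dagD X b)"
proof -
  have XK: "X a \<in> HE" if a: "a \<in> DE" for a
    using a XE by (metis E_idem HE_iff image_iff)
  have adj: "cinner (restr DE X a) b = cinner a (E (dagD X b))" if a: "a \<in> DE" and b: "b \<in> DE" for a b
  proof -
    have aD: "a \<in> D" and bD: "b \<in> D" using a b DE_sub_D by auto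
    have "cinner (restr DE X a) b = cinner a (dagD X b)"
      using a dagD_adjoint[OF X aD bD] by (simp add: restr_in)
    also have "\<dots> = cinner a (E (dagD X b))" by (rule cinner_HE_left) (use a in auto)
    finally show ?thesis .
  qed
  show L: "restr DE X \<in> Ldag HE DE"
  proof (rule LdagI)
    show "\<forall>x\<in>DE. \<forall>y\<in>DE. restr DE X (x + y) = restr DE X x + restr DE X y"
      using Ldag_add[OF X] DE_sub_D csubspace_add[OF DE_csubspace] by (auto simp: restr_in)
    show "\<forall>a. \<forall>x\<in>DE. restr DE X (scaleC a x) = scaleC a (restr DE X x)"
      using Ldag_scaleC[OF X] DE_sub_D csubspace_scaleC[OF DE_csubspace] by (auto simp: restr_in)
  qed (use XK adj in \<open>auto simp: restr_in restr_out\<close>)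
  show "\<forall>b\<in>DE. dagE (restr DE X) b = E (dagD X b)"
    using dag_unique[OF DE_separating] adj by auto
qed

lemma ME_dag:
  assumes X: "X \<in> M" and b: "b \<in> DE"
  shows "dagE (restr DE X) b = dagD X b" and "dagD X b \<in> HE"
proof -
  have "dagE (restr DE X) b = E (dagD X b)"
    using restrict_Ldag(2)[OF M_Ldag[OF X] ballI[OF M_E[OF X]]] b by blast
  moreover have "dagD X b \<in> HE" by (rule M_maps_DE_to_HE[OF M_dag[OF X] b])
  ultimately show "dagE (restr DE X) b = dagD X b" "dagD X b \<in> HE" using HE_iff by auto
qed

lemma ME_intro: "X \<in> M \<Longrightarrow> restr DE X \<in> ME"
  unfolding reduce_def by blast

lemma WE_Bop: "B \<in> WE \<Longrightarrow> B \<in> Bop HE"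
  unfolding wcomm_def by blast
lemma WE_cond: "B \<in> WE \<Longrightarrow> Y \<in> ME \<Longrightarrow> a \<in> DE \<Longrightarrow> b \<in> DE \<Longrightarrow> cinner (B (Y a)) b = cinner (B a) (dagE Y b)"
  unfolding wcomm_def by blast

lemma WE_intro:
  assumes B: "B \<in> Bop HE"
    and cond: "\<And>X a b. X \<in> M \<Longrightarrow> a \<in> DE \<Longrightarrow> b \<in> DE \<Longrightarrow> cinner (B (X a)) b = cinner (B a) (dagD X b)"
  shows "B \<in> WE"
  unfolding wcomm_def
proof (intro CollectI conjI ballI B)
  fix Y a b assume Y: "Y \<in> ME" and a: "a \<in> DE" and b: "b \<in> DE"
  obtain X where X: "X \<in> M" "Y = restr DE X" using Y unfolding reduce_def by blast
  show "cinner (B (Y a)) b = cinner (B a) (dagE Y b)"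
    using cond[OF X(1) a b] ME_dag(1)[OF X(1) b] a X(2) by (simp add: restr_in)
qed

lemma SE_Ldag: "T \<in> SE \<Longrightarrow> T \<in> Ldag HE DE"
  unfolding wsig_def by blast
lemma SE_cond: "T \<in> SE \<Longrightarrow> B \<in> WE \<Longrightarrow> a \<in> DE \<Longrightarrow> b \<in> DE \<Longrightarrow> cinner (B (T a)) b = cinner (B a) (dagE T b)"
  unfolding wsig_def by blast
lemma SE_into: "T \<in> SE \<Longrightarrow> a \<in> DE \<Longrightarrow> T a \<in> HE"
  using SE_Ldag Ldag_into by blast
lemma dagE_into: "T \<in> SE \<Longrightarrow> b \<in> DE \<Longrightarrow> dagE T b \<in> HE"
  using dag_into[OF SE_Ldag DE_separating] by blast

lemma Bop_compress:
  assumes F: "F \<in> Bop UNIV" and FK: "\<forall>x. F x \<in> HE" shows "restr HE F \<in> Bop HE"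
proof -
  obtain B where B: "\<forall>x. norm (F x) \<le> B * norm x" using Bop_bound[OF F] by auto
  show ?thesis unfolding Bop_def
  proof (intro CollectI conjI allI ballI impI exI)
    show "restr HE F ` HE \<subseteq> HE" using FK by (auto simp: restr_in)
    fix x assume "x \<in> HE" thus "norm (restr HE F x) \<le> B * norm x" using B by (simp add: restr_in)
  next
    fix x y assume "x \<in> HE" "y \<in> HE"
    thus "restr HE F (x + y) = restr HE F x + restr HE F y"
      using csubspace_add[OF HE_csubspace] Bop_add[OF F] by (simp add: restr_in)
  next
    fix a x assume "x \<in> HE"
    thus "restr HE F (scaleC a x) = scaleC a (restr HE F x)"
      using csubspace_scaleC[OF HE_csubspace] Bop_scaleC[OF F] by (simp add: restr_in)
  qed (simp add: restr_out)
qed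

lemma Bop_lift:
  assumes B: "B \<in> Bop HE" shows "(\<lambda>x. B (E x)) \<in> Bop UNIV"
proof -
  obtain c where c: "\<forall>x\<in>HE. norm (B x) \<le> c * norm x" using Bop_bound[OF B] by blast
  obtain e where e: "\<forall>x. norm (E x) \<le> e * norm x" using Bop_bound[OF E_Bop] by auto
  have "norm (B (E x)) \<le> (max c 0 * e) * norm x" for x
  proof -
    have "norm (B (E x)) \<le> c * norm (E x)" using c by simp
    also have "\<dots> \<le> max c 0 * norm (E x)" by (intro mult_right_mono) auto
    also have "\<dots> \<le> max c 0 * (e * norm x)" using e by (intro mult_left_mono) auto
    finally show ?thesis by (simp add: mult.assoc)
  qed
  thus ?thesis unfolding Bop_UNIV_iff
    using Bop_add[OF B] Bop_add[OF E_Bop] Bop_scaleC[OF B] Bop_scaleC[OF E_Bop] by auto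
qed

lemma compress_W:
  assumes C: "C \<in> W" shows "restr HE (\<lambda>x. E (C x)) \<in> WE"
proof (rule WE_intro)
  show "restr HE (\<lambda>x. E (C x)) \<in> Bop HE"
    by (rule Bop_compress[OF Bop_comp[OF E_Bop W_Bop[OF C]]]) simp
  have compr: "restr HE (\<lambda>x. E (C x)) k = E (C k)" if "k \<in> HE" for k
    using that by (simp add: restr_in)
  fix X a b assume X: "X \<in> M" and a: "a \<in> DE" and b: "b \<in> DE"
  have "cinner (restr HE (\<lambda>x. E (C x)) (X a)) b = cinner (E (C (X a))) b"
    using compr[OF M_maps_DE_to_HE[OF X a]] by simp
  also have "\<dots> = cinner (C (X a)) b" using cinner_HE_right[of b "C (X a)"] b by auto
  also have "\<dots> = cinner (C a) (dagD X b)" using W_cond[OF C X] a b DE_sub_D by auto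
  also have "\<dots> = cinner (E (C a)) (dagD X b)" by (rule cinner_HE_right[OF ME_dag(2)[OF X b]])
  also have "\<dots> = cinner (restr HE (\<lambda>x. E (C x)) a) (dagD X b)" using compr a by auto
  finally show "cinner (restr HE (\<lambda>x. E (C x)) (X a)) b = cinner (restr HE (\<lambda>x. E (C x)) a) (dagD X b)" .
qed

lemma lift_WE:
  assumes B: "B \<in> WE" shows "(\<lambda>x. B (E x)) \<in> W"
proof (rule W_intro[OF Bop_lift[OF WE_Bop[OF B]]])
  have BK: "B k \<in> HE" if "k \<in> HE" for k using Bop_into[OF WE_Bop[OF B] that] .
  fix Y \<xi> \<eta> assume Y: "Y \<in> M" and x: "\<xi> \<in> D" and e: "\<eta> \<in> D"
  have Ex: "E \<xi> \<in> DE" and Ee: "E \<eta> \<in> DE" using x e by auto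
  have YE: "restr DE Y (E \<xi>) = E (Y \<xi>)" using M_E[OF Y x] Ex by (simp add: restr_in)
  have "cinner (B (E (Y \<xi>))) \<eta> = cinner (B (E (Y \<xi>))) (E \<eta>)" by (rule cinner_HE_left[OF BK]) simp
  also have "\<dots> = cinner (B (restr DE Y (E \<xi>))) (E \<eta>)" by (simp only: YE)
  also have "\<dots> = cinner (B (E \<xi>)) (dagE (restr DE Y) (E \<eta>))" by (rule WE_cond[OF B ME_intro[OF Y] Ex Ee])
  also have "\<dots> = cinner (B (E \<xi>)) (E (dagD Y \<eta>))" using ME_dag(1)[OF Y Ee] M_E[OF M_dag[OF Y] e] by simp
  also have "\<dots> = cinner (B (E \<xi>)) (dagD Y \<eta>)" by (rule cinner_HE_left[OF BK, symmetric]) simp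
  finally show "cinner (B (E (Y \<xi>))) \<eta> = cinner (B (E \<xi>)) (dagD Y \<eta>)" .
qed

text \<open>(M_E')'_w is closed under adjoints (in E'H): compress the adjoint of the lift.\<close>

lemma WE_adjoint:
  assumes B: "B \<in> WE"
  obtains B' where "B' \<in> WE" and "\<And>x y. x \<in> HE \<Longrightarrow> y \<in> HE \<Longrightarrow> cinner (B x) y = cinner x (B' y)"
proof
  define G where "G = (\<lambda>x. B (E x))"
  have G: "G \<in> W" unfolding G_def by (rule lift_WE[OF B])
  show "restr HE (\<lambda>x. E (adj G x)) \<in> WE" by (rule compress_W[OF W_adj[OF G]])
  fix x y assume x: "x \<in> HE" and y: "y \<in> HE"
  have "cinner (B x) y = cinner (G x) y" using x HE_iff by (simp add: G_def)
  also have "\<dots> = cinner x (adj G y)" by (rule cinner_adj[OF W_Bop[OF G]])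
  also have "\<dots> = cinner x (restr HE (\<lambda>x. E (adj G x)) y)"
    using cinner_HE_left[OF x, of "adj G y"] y by (simp add: restr_in)
  finally show "cinner (B x) y = cinner x (restr HE (\<lambda>x. E (adj G x)) y)" .
qed

lemma SE_dag:
  assumes T: "T \<in> SE" shows "dagE T \<in> SE"
proof -
  have TL: "T \<in> Ldag HE DE" by (rule SE_Ldag[OF T])
  have "cinner (B (dagE T a)) b = cinner (B a) (T b)" if B: "B \<in> WE" and a: "a \<in> DE" and b: "b \<in> DE" for B a b
  proof -
    obtain B' where B': "B' \<in> WE" "\<And>x y. x \<in> HE \<Longrightarrow> y \<in> HE \<Longrightarrow> cinner (B x) y = cinner x (B' y)"
      using WE_adjoint[OF B] by blast
    have "cinner (B (dagE T a)) b = cnj (cinner (B' b) (dagE T a))"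
      using B'(2)[OF dagE_into[OF T a]] b by (auto simp: cinner_commute[of "dagE T a"])
    also have "\<dots> = cnj (cinner (B' (T b)) a)" using SE_cond[OF T B'(1) b a] by simp
    also have "\<dots> = cinner (B a) (T b)"
      using B'(2)[of a "T b"] a SE_into[OF T b] by (auto simp: cinner_commute[of a])
    finally show ?thesis .
  qed
  thus ?thesis unfolding wsig_def
    using dag_Ldag[OF TL DE_separating HE_csubspace DE_csubspace] dag_dag[OF TL DE_separating] by auto
qed

text \<open>It follows by testing T against
  the compression of C'* C, which lies in (M_E')'_w.\<close>

lemma compressed_inner:
  assumes T: "T \<in> SE" and C: "C \<in> W" and C': "C' \<in> W" and a: "a \<in> DE" and b: "b \<in> DE"
  shows "cinner (C (T a)) (C' b) = cinner (C a) (C' (dagE T b))"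
proof -
  define B where "B = restr HE (\<lambda>x. E (adj C' (C x)))"
  have B: "B \<in> WE" unfolding B_def by (rule compress_W[OF W_comp[OF W_adj[OF C'] C]])
  have key: "cinner (B k) l = cinner (C k) (C' l)" if "k \<in> HE" "l \<in> HE" for k l
    using cinner_HE_right[OF that(2), of "adj C' (C k)", symmetric] that(1)
    by (simp add: B_def restr_in cinner_adj_left[OF W_Bop[OF C']])
  have "cinner (C (T a)) (C' b) = cinner (B (T a)) b" using key[OF SE_into[OF T a]] b by auto
  also have "\<dots> = cinner (B a) (dagE T b)" by (rule SE_cond[OF T B a b])
  also have "\<dots> = cinner (C a) (C' (dagE T b))" using key[OF _ dagE_into[OF T b]] a by auto
  finally show ?thesis .
qed

lemma restriction_in_SE:
  assumes X: "X \<in> wsig UNIV D M" shows "restr DE X \<in> SE"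
proof -
  have XL: "X \<in> Ldag UNIV D" using X unfolding wsig_def by blast
  have Xc: "\<And>C \<xi> \<eta>. C \<in> W \<Longrightarrow> \<xi> \<in> D \<Longrightarrow> \<eta> \<in> D \<Longrightarrow> cinner (C (X \<xi>)) \<eta> = cinner (C \<xi>) (dagD X \<eta>)"
    using X unfolding wsig_def by blast
  have XE: "\<forall>\<xi>\<in>D. E (X \<xi>) = X (E \<xi>)"
    using weak_commutation[where C = E, OF XL _ W_D[OF E_comm]] Xc[OF E_comm] by blast
  note R = restrict_Ldag[OF XL XE]
  have "cinner (B (restr DE X a)) b = cinner (B a) (dagE (restr DE X) b)"
    if B: "B \<in> WE" and a: "a \<in> DE" and b: "b \<in> DE" for B a b
  proof -
    have BK: "B k \<in> HE" if "k \<in> HE" for k using Bop_into[OF WE_Bop[OF B] that] .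
    have XaK: "X a \<in> HE" using Ldag_into[OF R(1) a] a by (simp add: restr_in)
    have "cinner (B (restr DE X a)) b = cinner (B (E (X a))) b"
      using a XaK HE_iff by (simp add: restr_in)
    also have "\<dots> = cinner (B (E a)) (dagD X b)" using Xc[OF lift_WE[OF B]] a b DE_sub_D by auto
    also have "\<dots> = cinner (B a) (E (dagD X b))"
      using a HE_iff cinner_HE_left[OF BK, of a "dagD X b"] by auto
    also have "\<dots> = cinner (B a) (dagE (restr DE X) b)" using bspec[OF R(2) b] by simp
    finally show ?thesis .
  qed
  thus ?thesis unfolding wsig_def using R(1) by blast
qed

end

section \<open>The central support Z of E'\<close>

lemma cspan_elim: "y \<in> cspan S \<Longrightarrow> \<exists>(n::nat) c v. (\<forall>k<n. v k \<in> S) \<and> y = (\<Sum>k<n. scaleC (c k) (v k))"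
  by (simp add: cspan_def)
lemma cspan_intro: "\<forall>k<(n::nat). v k \<in> S \<Longrightarrow> (\<Sum>k<n. scaleC (c k) (v k)) \<in> cspan S"
  unfolding cspan_def by blast
lemma cspan_base: "x \<in> S \<Longrightarrow> x \<in> cspan S"
  using cspan_intro[of 1 "\<lambda>_. x" S "\<lambda>_. 1"] by (simp add: scaleC_one)

locale central_support_setting = reduction_setting D M E
  for D :: "'h::chilbert_space set" and M E +
  fixes Z :: "'h \<Rightarrow> 'h"
  assumes Z_proj: "is_proj Z"
    and Z_range: "range Z = closure (cspan {C (E x) | C x. C \<in> wcomm UNIV D M})"
begin

abbreviation "WEH \<equiv> {C (E x) | C x. C \<in> W}"

lemma WEH_I: "C \<in> W \<Longrightarrow> C (E x) \<in> WEH"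
  by blast

lemma Z_Bop: "Z \<in> Bop UNIV"
  using Z_proj by (rule proj_Bop)
lemma Z_selfadjoint: "cinner (Z x) y = cinner x (Z y)"
  using Z_proj by (rule proj_selfadjoint)
lemma rangeZ_iff: "x \<in> range Z \<longleftrightarrow> Z x = x"
  using Z_proj by (rule proj_range)
lemma rangeZ_csubspace: "csubspace (range Z)"
  using Z_proj by (rule proj_range_csubspace)
lemma rangeZ_closed: "closed (range Z)"
  unfolding Z_range by simp

lemma WEH_rangeZ: "C \<in> W \<Longrightarrow> C (E x) \<in> range Z"
  unfolding Z_range by (rule subsetD[OF closure_subset], rule cspan_base, rule WEH_I)

lemma rangeZ_orthogonal: "p \<in> range Z \<Longrightarrow> cinner p (q - Z q) = 0"
  using Z_proj by (rule proj_orthogonal)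
lemma rangeZ_orthogonal': "p \<in> range Z \<Longrightarrow> cinner (q - Z q) p = 0"
  using rangeZ_orthogonal cinner_commute_zero by blast

text \<open>A vector of range Z orthogonal to M'_w E'D vanishes (E'D is dense in E'H and
  range Z is the closed span of M'_w E'H).\<close>

lemma rangeZ_determined:
  assumes p: "p \<in> range Z" and orth: "\<forall>C\<in>W. \<forall>x\<in>D. cinner p (C (E x)) = 0"
  shows "p = 0"
proof -
  have orth_WEH: "cinner p (C (E x)) = 0" if C: "C \<in> W" for C x
  proof -
    obtain s where s: "\<forall>n. s n \<in> D" "s \<longlonglongrightarrow> x" using D_dense closure_sequential by (metis UNIV_I)
    have "(\<lambda>n. C (E (s n))) \<longlonglongrightarrow> C (E x)"
      by (rule Bop_tendsto[OF W_Bop[OF C] Bop_tendsto[OF E_Bop s(2)]])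
    hence "C (E x) \<in> closure ((\<lambda>\<xi>. C (E \<xi>)) ` D)"
      unfolding closure_sequential using s(1) by (intro exI[of _ "\<lambda>n. C (E (s n))"]) auto
    thus ?thesis by (rule orthogonal_closure[rotated]) (use orth C in blast)
  qed
  have "\<forall>y\<in>cspan WEH. cinner p y = 0"
  proof
    fix y assume "y \<in> cspan WEH"
    then obtain n :: nat and c v where v: "\<forall>k<n. v k \<in> WEH" "y = (\<Sum>k<n. scaleC (c k) (v k))"
      by (blast dest: cspan_elim)
    have "cinner p y = (\<Sum>k<n. cnj (c k) * cinner p (v k))"
      using v(2) by (simp add: cinner_sum_right cinner_scaleC_right)
    also have "\<dots> = 0" using v(1) orth_WEH by (intro sum.neutral) auto
    finally show "cinner p y = 0" .
  qed
  hence "cinner p p = 0" using orthogonal_closure p unfolding Z_range by blast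
  thus ?thesis by (simp add: cinner_eq_zero_iff)
qed

text \<open>range Z is invariant under M'_w; since M'_w is *-closed, Z commutes with M'_w.\<close>

lemma rangeZ_invariant:
  assumes C: "C \<in> W" and p: "p \<in> range Z" shows "C p \<in> range Z"
proof -
  have CB: "C \<in> Bop UNIV" using W_Bop[OF C] .
  have span: "C y \<in> cspan WEH" if y: "y \<in> cspan WEH" for y
  proof -
    obtain n :: nat and c v where v: "\<forall>k<n. v k \<in> WEH" "y = (\<Sum>k<n. scaleC (c k) (v k))"
      using cspan_elim[OF y] by blast
    have "C y = (\<Sum>k<n. scaleC (c k) (C (v k)))" using v(2) by (simp add: Bop_sum[OF CB] Bop_scaleC[OF CB])
    moreover have "C (v k) \<in> WEH" if k: "k < n" for k
    proof -
      obtain C' x where C': "C' \<in> W" "v k = C' (E x)" using v(1) k by blast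
      show ?thesis using WEH_I[OF W_comp[OF C C'(1)], of x] C'(2) by simp
    qed
    ultimately show ?thesis using cspan_intro[of n "\<lambda>k. C (v k)" WEH c] by simp
  qed
  obtain s where s: "\<forall>n. s n \<in> cspan WEH" "s \<longlonglongrightarrow> p"
    using p unfolding Z_range closure_sequential by blast
  have "(\<lambda>n. C (s n)) \<longlonglongrightarrow> C p" by (rule Bop_tendsto[OF CB s(2)])
  moreover have "\<forall>n. C (s n) \<in> cspan WEH" using s(1) span by blast
  ultimately show ?thesis unfolding Z_range closure_sequential by (intro exI[of _ "\<lambda>n. C (s n)"]) simp
qed

lemma Z_commutes: assumes C: "C \<in> W" shows "Z (C x) = C (Z x)"
proof (rule cinner_ext_left, rule allI)
  fix y
  have CB: "C \<in> Bop UNIV" using W_Bop[OF C] .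
  have 1: "Z (adj C (Z y)) = adj C (Z y)" using rangeZ_invariant[OF W_adj[OF C]] rangeZ_iff by blast
  have 2: "Z (C (Z x)) = C (Z x)" using rangeZ_invariant[OF C] rangeZ_iff by blast
  have "cinner (Z (C x)) y = cinner x (adj C (Z y))" by (simp add: Z_selfadjoint cinner_adj[OF CB])
  also have "\<dots> = cinner x (Z (adj C (Z y)))" by (simp only: 1)
  also have "\<dots> = cinner (C (Z x)) (Z y)" by (simp add: Z_selfadjoint cinner_adj[OF CB])
  also have "\<dots> = cinner (Z (C (Z x))) y" by (simp add: Z_selfadjoint)
  also have "\<dots> = cinner (C (Z x)) y" by (simp only: 2)
  finally show "cinner (Z (C x)) y = cinner (C (Z x)) y" .
qed

end

section \<open>The extension X_e on calE\<close>

context central_support_setting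
begin

abbreviation "calE \<equiv> ext_dom W E Z D"
abbreviation "ext \<equiv> ext_op W E Z D"

text \<open>ext_rep T v w: v = sum_k C_k E'xi_k + (I - Z) eta is a representation of v in calE
  and w = sum_k C_k T E'xi_k is the value it assigns to T_e v.\<close>

definition ext_rep :: "('h \<Rightarrow> 'h) \<Rightarrow> 'h \<Rightarrow> 'h \<Rightarrow> bool" where
  "ext_rep T v w \<longleftrightarrow> (\<exists>(n::nat) C \<xi> \<eta>. (\<forall>k<n. C k \<in> W \<and> \<xi> k \<in> D) \<and> \<eta> \<in> D
      \<and> v = (\<Sum>k<n. C k (E (\<xi> k))) + (\<eta> - Z \<eta>)
      \<and> w = (\<Sum>k<n. C k (T (E (\<xi> k)))))"

lemma ext_op_eq: "ext T = restr calE (\<lambda>v. SOME w. ext_rep T v w)"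
  unfolding ext_op_def ext_rep_def by (rule refl)

lemma ext_repE:
  assumes "ext_rep T v w"
  obtains n :: nat and C \<xi> \<eta> where "\<forall>k<n. C k \<in> W \<and> \<xi> k \<in> D" "\<eta> \<in> D"
    "v = (\<Sum>k<n. C k (E (\<xi> k))) + (\<eta> - Z \<eta>)" "w = (\<Sum>k<n. C k (T (E (\<xi> k))))"
  using assms unfolding ext_rep_def by blast

lemma ext_repI:
  assumes "\<forall>k<n. C k \<in> W \<and> \<xi> k \<in> D" "\<eta> \<in> D"
  shows "ext_rep T ((\<Sum>k<(n::nat). C k (E (\<xi> k))) + (\<eta> - Z \<eta>)) (\<Sum>k<n. C k (T (E (\<xi> k))))"
  unfolding ext_rep_def using assms by blast

lemma ext_rep_single: assumes "C \<in> W" "\<xi> \<in> D" shows "ext_rep T (C (E \<xi>)) (C (T (E \<xi>)))"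
proof -
  have "ext_rep T ((\<Sum>k<(1::nat). (\<lambda>_. C) k (E ((\<lambda>_. \<xi>) k))) + (0 - Z 0))
      (\<Sum>k<(1::nat). (\<lambda>_. C) k (T (E ((\<lambda>_. \<xi>) k))))"
    by (rule ext_repI) (use assms csubspace_zero[OF D_subspace] in auto)
  thus ?thesis using Bop_zero[OF Z_Bop] by simp
qed

lemma ext_rep_dom: assumes "ext_rep T v w" shows "v \<in> calE"
proof -
  obtain n :: nat and C \<xi> \<eta> where h: "\<forall>k<n. C k \<in> W \<and> \<xi> k \<in> D" "\<eta> \<in> D"
    "v = (\<Sum>k<n. C k (E (\<xi> k))) + (\<eta> - Z \<eta>)"
    by (rule ext_repE[OF assms])
  have "(\<Sum>k<n. scaleC ((\<lambda>_. 1) k) ((\<lambda>k. C k (E (\<xi> k))) k)) \<in> cspan {C (E \<xi>) | C \<xi>. C \<in> W \<and> \<xi> \<in> D}"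
    by (rule cspan_intro) (use h(1) in blast)
  hence "(\<Sum>k<n. C k (E (\<xi> k))) \<in> cspan {C (E \<xi>) | C \<xi>. C \<in> W \<and> \<xi> \<in> D}" by (simp add: scaleC_one)
  thus ?thesis unfolding ext_dom_def using h(2,3) by blast
qed

lemma ext_dom_rep: assumes "v \<in> calE" shows "\<exists>w. ext_rep T v w"
proof -
  obtain u \<eta> where u: "v = u + (\<eta> - Z \<eta>)" "u \<in> cspan {C (E \<xi>) | C \<xi>. C \<in> W \<and> \<xi> \<in> D}" "\<eta> \<in> D"
    using assms unfolding ext_dom_def by blast
  obtain n :: nat and c g where g: "\<forall>k<n. g k \<in> {C (E \<xi>) | C \<xi>. C \<in> W \<and> \<xi> \<in> D}"
    "u = (\<Sum>k<n. scaleC (c k) (g k))" using cspan_elim[OF u(2)] by blast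
  have ex: "\<forall>k\<in>{..<n}. \<exists>p. fst p \<in> W \<and> snd p \<in> D \<and> g k = fst p (E (snd p))"
  proof
    fix k assume "k \<in> {..<n}"
    then obtain C \<xi> where "C \<in> W" "\<xi> \<in> D" "g k = C (E \<xi>)" using g(1) by auto
    thus "\<exists>p. fst p \<in> W \<and> snd p \<in> D \<and> g k = fst p (E (snd p))" by (intro exI[of _ "(C, \<xi>)"]) simp
  qed
  then obtain p where p: "\<forall>k\<in>{..<n}. fst (p k) \<in> W \<and> snd (p k) \<in> D \<and> g k = fst (p k) (E (snd (p k)))"
    using bchoice[OF ex] by blast
  define C where "C k = (\<lambda>x. scaleC (c k) (fst (p k) x))" for k
  have C: "\<forall>k<n. C k \<in> W \<and> snd (p k) \<in> D" using p W_scale unfolding C_def by blast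
  have "u = (\<Sum>k<n. C k (E (snd (p k))))" unfolding g(2) C_def using p by (intro sum.cong) auto
  hence "ext_rep T v (\<Sum>k<n. C k (T (E (snd (p k)))))" using ext_repI[OF C u(3), of T] u(1) by simp
  thus ?thesis by blast
qed

lemma ext_value: assumes "v \<in> calE" shows "ext_rep T v (ext T v)"
  using someI_ex[OF ext_dom_rep[OF assms]] assms by (simp add: ext_op_eq restr_in)

lemma ext_rep_rangeZ: assumes T: "T \<in> SE" and r: "ext_rep T v w" shows "w \<in> range Z"
proof -
  obtain n :: nat and C \<xi> where h: "\<forall>k<n. C k \<in> W \<and> \<xi> k \<in> D" "w = (\<Sum>k<n. C k (T (E (\<xi> k))))"
    by (rule ext_repE[OF r])
  have "C k (T (E (\<xi> k))) \<in> range Z" if k: "k < n" for k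
  proof -
    have "E (T (E (\<xi> k))) = T (E (\<xi> k))" using SE_into[OF T] h(1) k HE_iff by blast
    thus ?thesis using WEH_rangeZ[of "C k" "T (E (\<xi> k))"] h(1) k by simp
  qed
  thus ?thesis unfolding h(2) by (intro csubspace_sum[OF rangeZ_csubspace]) auto
qed

lemma ext_rep_inner_span:
  assumes T: "T \<in> SE" and C: "\<forall>k<n. C k \<in> W \<and> \<xi> k \<in> D" and C': "\<forall>j<m. C' j \<in> W \<and> \<zeta> j \<in> D"
  shows "cinner (\<Sum>k<(n::nat). C k (T (E (\<xi> k)))) (\<Sum>j<(m::nat). C' j (E (\<zeta> j)))
       = cinner (\<Sum>k<n. C k (E (\<xi> k))) (\<Sum>j<m. C' j (dagE T (E (\<zeta> j))))"
proof -
  have "cinner (\<Sum>k<n. C k (T (E (\<xi> k)))) (\<Sum>j<m. C' j (E (\<zeta> j)))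
      = (\<Sum>k<n. \<Sum>j<m. cinner (C k (T (E (\<xi> k)))) (C' j (E (\<zeta> j))))"
    by (rule cinner_sum_sum)
  also have "\<dots> = (\<Sum>k<n. \<Sum>j<m. cinner (C k (E (\<xi> k))) (C' j (dagE T (E (\<zeta> j)))))"
    using compressed_inner[OF T] C C' by (intro sum.cong refl) auto
  also have "\<dots> = cinner (\<Sum>k<n. C k (E (\<xi> k))) (\<Sum>j<m. C' j (dagE T (E (\<zeta> j))))"
    by (rule cinner_sum_sum[symmetric])
  finally show ?thesis .
qed

lemma ext_rep_inner:
  assumes T: "T \<in> SE" and r1: "ext_rep T u w" and r2: "ext_rep (dagE T) v w'"
  shows "cinner w v = cinner u w'"
proof -
  obtain n :: nat and C \<xi> a where h: "\<forall>k<n. C k \<in> W \<and> \<xi> k \<in> D"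
    "u = (\<Sum>k<n. C k (E (\<xi> k))) + (a - Z a)" "w = (\<Sum>k<n. C k (T (E (\<xi> k))))"
    by (rule ext_repE[OF r1])
  obtain m :: nat and C' \<zeta> b where h': "\<forall>j<m. C' j \<in> W \<and> \<zeta> j \<in> D"
    "v = (\<Sum>j<m. C' j (E (\<zeta> j))) + (b - Z b)" "w' = (\<Sum>j<m. C' j (dagE T (E (\<zeta> j))))"
    by (rule ext_repE[OF r2])
  have "cinner w (b - Z b) = 0" by (rule rangeZ_orthogonal[OF ext_rep_rangeZ[OF T r1]])
  moreover have "cinner (a - Z a) w' = 0" by (rule rangeZ_orthogonal'[OF ext_rep_rangeZ[OF SE_dag[OF T] r2]])
  ultimately show ?thesis
    using ext_rep_inner_span[OF T h(1) h'(1)] unfolding h(2,3) h'(2,3)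
    by (simp add: cinner_add_left cinner_add_right)
qed

lemma ext_rep_unique:
  assumes T: "T \<in> SE" and r1: "ext_rep T v w1" and r2: "ext_rep T v w2" shows "w1 = w2"
proof -
  have "w1 - w2 = 0"
  proof (rule rangeZ_determined)
    show "w1 - w2 \<in> range Z"
      using ext_rep_rangeZ[OF T r1] ext_rep_rangeZ[OF T r2] by (rule csubspace_diff[OF rangeZ_csubspace])
    show "\<forall>C\<in>W. \<forall>x\<in>D. cinner (w1 - w2) (C (E x)) = 0"
    proof (intro ballI)
      fix C x assume "C \<in> W" "x \<in> D"
      note r = ext_rep_single[OF this, of "dagE T"]
      show "cinner (w1 - w2) (C (E x)) = 0"
        using ext_rep_inner[OF T r1 r] ext_rep_inner[OF T r2 r] by (simp add: cinner_diff_left)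
    qed
  qed
  thus ?thesis by simp
qed

lemma ext_eq: assumes T: "T \<in> SE" and r: "ext_rep T v w" shows "ext T v = w"
  by (rule ext_rep_unique[OF T ext_value[OF ext_rep_dom[OF r]] r])

lemma ext_adjoint:
  assumes "T \<in> SE" "u \<in> calE" "v \<in> calE" shows "cinner (ext T u) v = cinner u (ext (dagE T) v)"
  by (rule ext_rep_inner[OF assms(1) ext_value[OF assms(2)] ext_value[OF assms(3)]])

text \<open>calE and the extension are invariant under M'_w (as Z commutes with M'_w).\<close>

lemma ext_rep_commute:
  assumes C: "C \<in> W" and r: "ext_rep T v w" shows "ext_rep T (C v) (C w)"
proof -
  have CB: "C \<in> Bop UNIV" by (rule W_Bop[OF C])
  obtain n :: nat and CC \<xi> \<eta> where h: "\<forall>k<n. CC k \<in> W \<and> \<xi> k \<in> D" "\<eta> \<in> D"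
    "v = (\<Sum>k<n. CC k (E (\<xi> k))) + (\<eta> - Z \<eta>)" "w = (\<Sum>k<n. CC k (T (E (\<xi> k))))"
    by (rule ext_repE[OF r])
  define C2 where "C2 k = (\<lambda>x. C (CC k x))" for k
  have C2: "\<forall>k<n. C2 k \<in> W \<and> \<xi> k \<in> D" using h(1) W_comp[OF C] unfolding C2_def by blast
  have "C v = (\<Sum>k<n. C2 k (E (\<xi> k))) + (C \<eta> - Z (C \<eta>))"
    unfolding h(3) C2_def by (simp add: Bop_add[OF CB] Bop_sum[OF CB] Bop_diff[OF CB] Z_commutes[OF C])
  moreover have "C w = (\<Sum>k<n. C2 k (T (E (\<xi> k))))"
    unfolding h(4) C2_def by (simp add: Bop_sum[OF CB])
  ultimately show ?thesis using ext_repI[OF C2 W_D[OF C h(2)], of T] by simp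
qed

end

context central_support_setting
begin

text \<open>Limits of T_e along sequences in calE converging
  to xi are weak values, and weak values are unique.\<close>

definition weak_value :: "('h \<Rightarrow> 'h) \<Rightarrow> 'h \<Rightarrow> 'h \<Rightarrow> bool" where
  "weak_value T \<xi> L \<longleftrightarrow> L \<in> range Z \<and> (\<forall>v\<in>calE. cinner L v = cinner \<xi> (ext (dagE T) v))"

lemma weak_value_unique:
  assumes c1: "weak_value T \<xi> L1" and c2: "weak_value T \<xi> L2" shows "L1 = L2"
proof -
  have "L1 - L2 = 0"
  proof (rule rangeZ_determined)
    show "L1 - L2 \<in> range Z"
      using c1 c2 unfolding weak_value_def by (blast intro: csubspace_diff[OF rangeZ_csubspace])
    show "\<forall>C\<in>W. \<forall>x\<in>D. cinner (L1 - L2) (C (E x)) = 0"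
    proof (intro ballI)
      fix C x assume "C \<in> W" "x \<in> D"
      hence "C (E x) \<in> calE" by (rule ext_rep_dom[OF ext_rep_single])
      thus "cinner (L1 - L2) (C (E x)) = 0"
        using c1 c2 unfolding weak_value_def by (simp add: cinner_diff_left)
    qed
  qed
  thus ?thesis by simp
qed

lemma weak_value_limit:
  assumes T: "T \<in> SE" and s: "\<forall>n. s n \<in> calE" "s \<longlonglongrightarrow> \<xi>" and l: "(\<lambda>n. ext T (s n)) \<longlonglongrightarrow> L"
  shows "weak_value T \<xi> L"
  unfolding weak_value_def
proof (intro conjI ballI)
  have "\<And>n. ext T (s n) \<in> range Z" using ext_rep_rangeZ[OF T ext_value] s(1) by blast
  thus "L \<in> range Z" by (rule closed_sequentially[OF rangeZ_closed _ l])
  fix v assume v: "v \<in> calE"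
  have "(\<lambda>n. cinner (ext T (s n)) v) \<longlonglongrightarrow> cinner L v" by (rule tendsto_cinner_left[OF l])
  moreover have "(\<lambda>n. cinner (ext T (s n)) v) = (\<lambda>n. cinner (s n) (ext (dagE T) v))"
    using ext_adjoint[OF T _ v] s(1) by blast
  moreover have "(\<lambda>n. cinner (s n) (ext (dagE T) v)) \<longlonglongrightarrow> cinner \<xi> (ext (dagE T) v)"
    by (rule tendsto_cinner_left[OF s(2)])
  ultimately show "cinner L v = cinner \<xi> (ext (dagE T) v)" using LIMSEQ_unique by metis
qed

lemma weak_value_add:
  "weak_value T x L1 \<Longrightarrow> weak_value T y L2 \<Longrightarrow> weak_value T (x + y) (L1 + L2)"
  unfolding weak_value_def by (auto intro: csubspace_add[OF rangeZ_csubspace] simp: cinner_add_left)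

lemma weak_value_scaleC:
  "weak_value T x L \<Longrightarrow> weak_value T (scaleC a x) (scaleC a L)"
  unfolding weak_value_def by (auto intro: csubspace_scaleC[OF rangeZ_csubspace] simp: cinner_scaleC_left)

lemma weak_value_commute:
  assumes T: "T \<in> SE" and C: "C \<in> W" and c: "weak_value T \<xi> L"
  shows "weak_value T (C \<xi>) (C L)"
  unfolding weak_value_def
proof (intro conjI ballI)
  show "C L \<in> range Z" using rangeZ_invariant[OF C] c unfolding weak_value_def by blast
  fix v assume v: "v \<in> calE"
  have CB: "C \<in> Bop UNIV" by (rule W_Bop[OF C])
  have r: "ext_rep (dagE T) (adj C v) (adj C (ext (dagE T) v))"
    by (rule ext_rep_commute[OF W_adj[OF C] ext_value[OF v]])
  have "cinner (C L) v = cinner L (adj C v)" by (rule cinner_adj[OF CB])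
  also have "\<dots> = cinner \<xi> (ext (dagE T) (adj C v))" using c ext_rep_dom[OF r] unfolding weak_value_def by blast
  also have "\<dots> = cinner \<xi> (adj C (ext (dagE T) v))" by (simp only: ext_eq[OF SE_dag[OF T] r])
  also have "\<dots> = cinner (C \<xi>) (ext (dagE T) v)" by (rule cinner_adj[OF CB, symmetric])
  finally show "cinner (C L) v = cinner (C \<xi>) (ext (dagE T) v)" .
qed

definition closure_op :: "('h \<Rightarrow> 'h) \<Rightarrow> 'h \<Rightarrow> 'h" where
  "closure_op T = restr D (\<lambda>\<xi>. THE L. weak_value T \<xi> L)"

lemma closure_op_eq: assumes x: "\<xi> \<in> D" and c: "weak_value T \<xi> L" shows "closure_op T \<xi> = L"
proof -
  have "(THE L. weak_value T \<xi> L) = L" using c weak_value_unique by blast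
  thus ?thesis unfolding closure_op_def using x by (simp add: restr_in)
qed

text \<open>On E'D, T itself supplies the weak value, so the candidate extends T.\<close>

lemma closure_op_restr: assumes T: "T \<in> SE" shows "restr DE (closure_op T) = T"
proof
  fix a show "restr DE (closure_op T) a = T a"
  proof (cases "a \<in> DE")
    case True
    then obtain \<xi> where \<xi>: "\<xi> \<in> D" "a = E \<xi>" by blast
    have r: "ext_rep T a (T a)" using ext_rep_single[OF W_id \<xi>(1), of T] \<xi>(2) by simp
    have "T a \<in> range Z" using WEH_rangeZ[OF W_id, of "T a"] SE_into[OF T True] HE_iff by simp
    hence "weak_value T a (T a)"
      unfolding weak_value_def using ext_rep_inner[OF T r ext_value] by blast
    thus ?thesis using closure_op_eq True DE_sub_D by (auto simp: restr_in)
  qed (simp add: restr_out Ldag_out[OF SE_Ldag[OF T]])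
qed

end

locale full_extension_setting = central_support_setting +
  assumes ext_full: "(\<Inter>X\<in>wsig (range E) (E ` D) (reduce E D M).
         cldom (ext_dom (wcomm UNIV D M) E Z D) (ext_op (wcomm UNIV D M) E Z D X)) = D"
begin

lemma closure_op_seq:
  assumes T: "T \<in> SE" and x: "\<xi> \<in> D"
  obtains s where "\<forall>n. s n \<in> calE" "s \<longlonglongrightarrow> \<xi>" "(\<lambda>n. ext T (s n)) \<longlonglongrightarrow> closure_op T \<xi>"
proof -
  have "\<xi> \<in> cldom calE (ext T)" using ext_full x T by blast
  then obtain s L where s: "\<forall>n. s n \<in> calE" "s \<longlonglongrightarrow> \<xi>" "(\<lambda>n. ext T (s n)) \<longlonglongrightarrow> L"
    unfolding cldom_def convergent_def by blast
  have "closure_op T \<xi> = L" by (rule closure_op_eq[OF x weak_value_limit[OF T s]])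
  thus ?thesis using that s by blast
qed

lemma closure_op_weak_value:
  assumes T: "T \<in> SE" and x: "\<xi> \<in> D" shows "weak_value T \<xi> (closure_op T \<xi>)"
proof -
  obtain s where "\<forall>n. s n \<in> calE" "s \<longlonglongrightarrow> \<xi>" "(\<lambda>n. ext T (s n)) \<longlonglongrightarrow> closure_op T \<xi>"
    using closure_op_seq[OF T x] by blast
  thus ?thesis by (rule weak_value_limit[OF T])
qed

lemma closure_op_adjoint:
  assumes T: "T \<in> SE" and x: "\<xi> \<in> D" and e: "\<eta> \<in> D"
  shows "cinner (closure_op T \<xi>) \<eta> = cinner \<xi> (closure_op (dagE T) \<eta>)"
proof -
  have dd: "dagE (dagE T) = T" by (rule dag_dag[OF SE_Ldag[OF T] DE_separating])
  have c: "\<forall>v\<in>calE. cinner (closure_op (dagE T) \<eta>) v = cinner \<eta> (ext T v)"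
    using closure_op_weak_value[OF SE_dag[OF T] e] unfolding weak_value_def dd by blast
  obtain s where s: "\<forall>n. s n \<in> calE" "s \<longlonglongrightarrow> \<xi>" "(\<lambda>n. ext T (s n)) \<longlonglongrightarrow> closure_op T \<xi>"
    using closure_op_seq[OF T x] by blast
  have "(\<lambda>n. cinner (ext T (s n)) \<eta>) \<longlonglongrightarrow> cinner (closure_op T \<xi>) \<eta>" by (rule tendsto_cinner_left[OF s(3)])
  moreover have "(\<lambda>n. cinner (ext T (s n)) \<eta>) = (\<lambda>n. cnj (cinner (closure_op (dagE T) \<eta>) (s n)))"
    using c s(1) by (simp add: cinner_commute[of \<eta>])
  moreover have "(\<lambda>n. cnj (cinner (closure_op (dagE T) \<eta>) (s n))) \<longlonglongrightarrow> cnj (cinner (closure_op (dagE T) \<eta>) \<xi>)"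
    by (intro tendsto_cnj tendsto_cinner_right s(2))
  ultimately have "cinner (closure_op T \<xi>) \<eta> = cnj (cinner (closure_op (dagE T) \<eta>) \<xi>)"
    using LIMSEQ_unique by metis
  thus ?thesis by (simp add: cinner_commute[of \<xi>])
qed

lemma closure_op_Ldag: assumes T: "T \<in> SE" shows "closure_op T \<in> Ldag UNIV D"
proof (rule LdagI)
  show "\<forall>x\<in>D. \<forall>y\<in>D. closure_op T (x + y) = closure_op T x + closure_op T y"
    by (intro ballI closure_op_eq csubspace_add[OF D_subspace] weak_value_add closure_op_weak_value[OF T])
  show "\<forall>a. \<forall>x\<in>D. closure_op T (scaleC a x) = scaleC a (closure_op T x)"
    by (intro allI ballI closure_op_eq csubspace_scaleC[OF D_subspace] weak_value_scaleC closure_op_weak_value[OF T])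
  show "\<forall>\<eta>\<in>D. \<exists>z\<in>UNIV. \<forall>\<xi>\<in>D. cinner (closure_op T \<xi>) \<eta> = cinner \<xi> z"
    using closure_op_adjoint[OF T] by blast
qed (auto simp: closure_op_def restr_out)

lemma closure_op_wsig: assumes T: "T \<in> SE" shows "closure_op T \<in> wsig UNIV D M"
  unfolding wsig_def
proof (intro CollectI conjI ballI)
  show "closure_op T \<in> Ldag UNIV D" by (rule closure_op_Ldag[OF T])
  fix C \<xi> \<eta> assume C: "C \<in> W" and x: "\<xi> \<in> D" and e: "\<eta> \<in> D"
  have "C (closure_op T \<xi>) = closure_op T (C \<xi>)"
    by (rule closure_op_eq[OF W_D[OF C x] weak_value_commute[OF T C closure_op_weak_value[OF T x]], symmetric])
  hence "cinner (C (closure_op T \<xi>)) \<eta> = cinner (C \<xi>) (closure_op (dagE T) \<eta>)"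
    using closure_op_adjoint[OF T W_D[OF C x] e] by simp
  also have "closure_op (dagE T) \<eta> = dagD (closure_op T) \<eta>"
    by (rule dag_unique[OF D_separating e, symmetric]) (use closure_op_adjoint[OF T _ e] in auto)
  finally show "cinner (C (closure_op T \<xi>)) \<eta> = cinner (C \<xi>) (dagD (closure_op T) \<eta>)" .
qed

lemma SE_in_reduction: assumes T: "T \<in> SE" shows "T \<in> reduce E D (wsig UNIV D M)"
  unfolding reduce_def[of E D "wsig UNIV D M"]
  by (rule image_eqI[where f = "restr DE", OF closure_op_restr[OF T, symmetric] closure_op_wsig[OF T]])

end

theorem lemma3p1:
  fixes D :: "'h::chilbert_space set"
    and M :: "('h \<Rightarrow> 'h) set"
    and E Z :: "'h \<Rightarrow> 'h"
  assumes D_subspace: "csubspace D"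
    and D_dense: "closure D = UNIV"
    and M_Ostar: "Ostar_space UNIV D M"
    and M_fully_closed: "fully_closed D M"
    and comm_inv: "\<forall>C\<in>wcomm UNIV D M. C ` D \<subseteq> D"
    and E_comm: "E \<in> wcomm UNIV D M"
    and E_proj: "is_proj E"
    and Z_proj: "is_proj Z"
    and Z_range: "range Z = closure (cspan {C (E x) | C x. C \<in> wcomm UNIV D M})"
    and ext_full: "(\<Inter>X\<in>wsig (range E) (E ` D) (reduce E D M).
         cldom (ext_dom (wcomm UNIV D M) E Z D) (ext_op (wcomm UNIV D M) E Z D X)) = D"
  shows "reduce E D (wsig UNIV D M) = wsig (range E) (E ` D) (reduce E D M)"
proof -
  interpret full_extension_setting D M E Z
    by unfold_locales (fact D_subspace D_dense M_Ostar comm_inv E_comm E_proj Z_proj Z_range ext_full)+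
  show ?thesis
  proof
    show "reduce E D (wsig UNIV D M) \<subseteq> SE"
      using restriction_in_SE unfolding reduce_def[of E D "wsig UNIV D M"] by blast
    show "SE \<subseteq> reduce E D (wsig UNIV D M)"
      using SE_in_reduction by blast
  qed
qed

end
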